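(* Let $\mathbb{F}\in\{\mathbb{R},\mathbb{C},\mathbb{H}\}$ and let $A\in\mathbb{F}_d[z,z^{-1}]$ be a matrix Laurent polynomial which, regarded as a complex matrix Laurent polynomial, satisfies $\det A(z)\neq 0$ for all $|z|=1$. Let $\mathcal{K}=\{\kappa_1\ge\dots\ge\kappa_d\}$ be its set of symmetric partial indices. Then there exists a factorization $A=A_+DA_-$ such that $A_+\in\mathbb{F}_d[z]$ is invertible for all $|z|\le 1$, $A_-\in\mathbb{F}_d[z^{-1}]$ is invertible for all $|z^{-1}|\le 1$, and $$D(z,z^{-1})=\sum_{m=1}^d z^{\kappa_m}\,|m\rangle\langle m|\,\mathbf{1}_{\mathbb{F}} .$$
   Context: $\mathbb{F}_d$ denotes $d\times d$ matrices with entries in $\mathbb{F}$, and $\mathbb{F}_d[z,z^{-1}]$ (resp. $\mathbb{F}_d[z]$, $\mathbb{F}_d[z^{-1}]$) denotes matrix Laurent polynomials $\sum_{r=p}^q a_r z^r$ with $a_r\in\mathbb{F}_d$ (resp. with only $r\ge0$, only $r\le 0$). Quaternions are realized inside $2\times2$ complex matrices as real combinations of $\mathbf{1}_{\mathbb{H}}=I_2$, $\mathbf{i}=i\sigma_x$, $\mathbf{j}=i\sigma_y$, $\mathbf{k}=i\sigma_z$; thus $\mathbb{H}_d\subset\mathbb{C}_{2d}$ consists of complex $2d\times 2d$ matrices $Q$ with $(I_d\otimes\sigma_y)\overline{Q}(I_d\otimes\sigma_y)=Q$, and $|m\rangle\langle m|\mathbf{1}_{\mathbb{F}}$ denotes the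 matrix unit at position $(m,m)$ (a $2\times2$ identity block when $\mathbb{F}=\mathbb{H}$). A (standard) Wiener–Hopf (WH) factorization of a complex matrix Laurent polynomial $A$ invertible on the unit circle is $A=A_+DA_-$ with $A_+$ a polynomial in $z$ invertible for $|z|\le1$, $A_-$ a polynomial in $z^{-1}$ invertible for $|z^{-1}|\le1$, and $D=\mathrm{diag}(z^{\kappa_1},\dots,z^{\kappa_n})$ with integers $\kappa_1\ge\dots\ge\kappa_n$; such a factorization exists and the integers (partial indices) are uniquely determined by $A$. Symmetric partial indices: for $\mathbb{F}=\mathbb{R},\mathbb{C}$, $\mathcal{K}$ is the list of standard partial indices of $A$; for $\mathbb{F}=\mathbb{H}$, the $2d$ standard partial indices of $A$ viewed in $\mathbb{C}_{2d}$ occur in equal pairs, and $\mathcal{K}$ is the list of $d$ integers obtained by keeping one from each pair, ordered $\kappa_1\ge\dots\ge\kappa_d$. *)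

theory Defs
  imports Complex_Main "Jordan_Normal_Form.Determinant"
begin

text \<open>The ground field F in {R, C, H}.  Quaternionic matrices are realized as complex
  matrices of twice the size; b F is the block size (1 for R, C and 2 for H).\<close>

datatype fld = FR | FC | FH

definition blk :: "fld \<Rightarrow> nat" where
  "blk F = (if F = FH then 2 else 1)"

text \<open>I_d tensor sigma_y, a complex 2d x 2d matrix.\<close>
definition Jq :: "nat \<Rightarrow> complex mat" where
  "Jq d = mat (2*d) (2*d) (\<lambda>(i,j). if i div 2 = j div 2 then
      (if i mod 2 = 0 \<and> j mod 2 = 1 then - \<i> else if i mod 2 = 1 \<and> j mod 2 = 0 then \<i> else 0)
    else 0)"

definition in_Fd :: "fld \<Rightarrow> nat \<Rightarrow> complex mat \<Rightarrow> bool" where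
  "in_Fd F d Q \<longleftrightarrow> Q \<in> carrier_mat (blk F * d) (blk F * d) \<and>
     (F = FR \<longrightarrow> map_mat cnj Q = Q) \<and>
     (F = FH \<longrightarrow> Jq d * map_mat cnj Q * Jq d = Q)"

text \<open>A (complex n x n) matrix Laurent polynomial is given by its coefficient function
  c :: int => complex mat, with finitely many nonzero coefficients, all n x n.\<close>
definition lsupp :: "nat \<Rightarrow> (int \<Rightarrow> complex mat) \<Rightarrow> int set" where
  "lsupp n c = {k. c k \<noteq> 0\<^sub>m n n}"

definition is_laurent :: "nat \<Rightarrow> (int \<Rightarrow> complex mat) \<Rightarrow> bool" where
  "is_laurent n c \<longleftrightarrow> (\<forall>k. c k \<in> carrier_mat n n) \<and> finite (lsupp n c)"

definition leval :: "nat \<Rightarrow> (int \<Rightarrow> complex mat) \<Rightarrow> complex \<Rightarrow> complex mat" where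
  "leval n c z = mat n n (\<lambda>(i,j). \<Sum>k\<in>lsupp n c. z powi k * (c k $$ (i,j)))"

text \<open>For a polynomial in z^{-1}: evaluation as a polynomial in the variable w = z^{-1}
  (this also makes sense at w = 0, i.e. z = infinity).\<close>
definition leval_inv :: "nat \<Rightarrow> (int \<Rightarrow> complex mat) \<Rightarrow> complex \<Rightarrow> complex mat" where
  "leval_inv n c w = mat n n (\<lambda>(i,j). \<Sum>k\<in>lsupp n c. w ^ nat (- k) * (c k $$ (i,j)))"

definition is_poly_pos :: "nat \<Rightarrow> (int \<Rightarrow> complex mat) \<Rightarrow> bool" where
  "is_poly_pos n c \<longleftrightarrow> is_laurent n c \<and> (\<forall>k<0. c k = 0\<^sub>m n n)"

definition is_poly_neg :: "nat \<Rightarrow> (int \<Rightarrow> complex mat) \<Rightarrow> bool" where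
  "is_poly_neg n c \<longleftrightarrow> is_laurent n c \<and> (\<forall>k>0. c k = 0\<^sub>m n n)"

definition is_F_laurent :: "fld \<Rightarrow> nat \<Rightarrow> (int \<Rightarrow> complex mat) \<Rightarrow> bool" where
  "is_F_laurent F d c \<longleftrightarrow> is_laurent (blk F * d) c \<and> (\<forall>k. in_Fd F d (c k))"

definition diag_pow :: "int list \<Rightarrow> complex \<Rightarrow> complex mat" where
  "diag_pow ks z = mat (length ks) (length ks) (\<lambda>(i,j). if i = j then z powi (ks ! i) else 0)"

definition plus_factor :: "nat \<Rightarrow> (int \<Rightarrow> complex mat) \<Rightarrow> bool" where
  "plus_factor n Ap \<longleftrightarrow> is_poly_pos n Ap \<and> (\<forall>z. cmod z \<le> 1 \<longrightarrow> det (leval n Ap z) \<noteq> 0)"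

definition minus_factor :: "nat \<Rightarrow> (int \<Rightarrow> complex mat) \<Rightarrow> bool" where
  "minus_factor n Am \<longleftrightarrow> is_poly_neg n Am \<and> (\<forall>w. cmod w \<le> 1 \<longrightarrow> det (leval_inv n Am w) \<noteq> 0)"

text \<open>ks is the list of standard partial indices of the complex n x n Laurent polynomial A:
  ks is nonincreasing and A admits a (complex) Wiener-Hopf factorization A = A+ D A-
  with D = diag(z^ks).  (Partial indices are unique, so this determines ks.)\<close>
definition std_partial_indices :: "nat \<Rightarrow> (int \<Rightarrow> complex mat) \<Rightarrow> int list \<Rightarrow> bool" where
  "std_partial_indices n A ks \<longleftrightarrow> length ks = n \<and> sorted_wrt (\<ge>) ks \<and>
     (\<exists>Ap Am. plus_factor n Ap \<and> minus_factor n Am \<and>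
        (\<forall>z. z \<noteq> 0 \<longrightarrow> leval n A z = leval n Ap z * diag_pow ks z * leval n Am z))"

text \<open>Symmetric partial indices K = [k_1 >= ... >= k_d]: for R, C the standard partial
  indices; for H the 2d standard indices come in equal pairs [k_1,k_1,...,k_d,k_d].\<close>
definition expand_idx :: "fld \<Rightarrow> int list \<Rightarrow> int list" where
  "expand_idx F K = (if F = FH then concat (map (\<lambda>k. [k, k]) K) else K)"

definition sym_partial_indices :: "fld \<Rightarrow> nat \<Rightarrow> (int \<Rightarrow> complex mat) \<Rightarrow> int list \<Rightarrow> bool" where
  "sym_partial_indices F d A K \<longleftrightarrow> length K = d \<and> sorted_wrt (\<ge>) K \<and>
     std_partial_indices (blk F * d) A (expand_idx F K)"

text \<open>D(z) = sum_m z^{k_m} |m><m| 1_F, as a complex (blk F * d) square matrix: the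
  diagonal entry at position i lies in block m = i div blk F.\<close>
definition D_F :: "fld \<Rightarrow> int list \<Rightarrow> complex \<Rightarrow> complex mat" where
  "D_F F K z = mat (blk F * length K) (blk F * length K)
     (\<lambda>(i,j). if i = j then z powi (K ! (i div blk F)) else 0)"

end

theory Submission
  imports Defs "HOL-Computational_Algebra.Fundamental_Theorem_Algebra"
    "HOL-Computational_Algebra.Field_as_Ring" "Jordan_Normal_Form.Char_Poly"
begin

text \<open>For \<open>\<real>\<close> and \<open>\<bbbH>\<close>, membership in \<open>\<bbbF>\<^sub>d\<close> is invariance under an antilinear
  involution \<open>X\<^sup># = J X\<^sup>* J\<close> (\<open>J = 1\<close>, resp. \<open>J = I \<otimes> \<sigma>\<^sub>y\<close>), which fixes \<open>D\<close> because
  the quaternionic partial indices come in pairs.  Applied to a complex factorization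
  \<open>A = A\<^sub>+ D A\<^sub>-\<close> it gives a second one, \<open>A = A\<^sub>+\<^sup># D A\<^sub>-\<^sup>#\<close>, and the classical uniqueness argument
  for Wiener--Hopf factors shows \<open>A\<^sub>+\<^sup># = A\<^sub>+ W\<close> with \<open>W\<close> polynomial in \<open>z\<close> and \<open>D\<^sup>-\<^sup>1 W D\<close>
  polynomial in \<open>z\<^sup>-\<^sup>1\<close>.  For a suitable scalar \<open>a\<close>, \<open>Y = a + \<bar>a\<bar> W\<close> (the bar denoting
  conjugation) has constant nonzero determinant, so \<open>A\<^sub>+ Y = a A\<^sub>+ + \<bar>a\<bar> A\<^sub>+\<^sup>#\<close> is a
  \<open>#\<close>-invariant plus factor; the matching minus factor \<open>(D\<^sup>-\<^sup>1 Y D)\<^sup>-\<^sup>1 A\<^sub>-\<close> is then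
  \<open>#\<close>-invariant as well, since the other two factors are.\<close>

section \<open>Polynomial functions\<close>

definition polyfun :: "(complex \<Rightarrow> complex) \<Rightarrow> bool" where
  "polyfun f \<longleftrightarrow> (\<exists>p. f = poly p)"

lemma polyfun_poly [simp, intro]: "polyfun (poly p)"
  unfolding polyfun_def by blast

lemma polyfun_const [simp, intro]: "polyfun (\<lambda>x. c)"
  unfolding polyfun_def by (rule exI[of _ "[:c:]"]) auto

lemma polyfun_ident [simp, intro]: "polyfun (\<lambda>x. x)"
  unfolding polyfun_def by (rule exI[of _ "[:0, 1:]"]) auto

lemma polyfun_add [intro]:
  assumes "polyfun f" "polyfun g" shows "polyfun (\<lambda>x. f x + g x)"
proof -
  obtain p q where "f = poly p" "g = poly q" using assms unfolding polyfun_def by blast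
  then show ?thesis unfolding polyfun_def by (intro exI[of _ "p + q"]) auto
qed

lemma polyfun_mult [intro]:
  assumes "polyfun f" "polyfun g" shows "polyfun (\<lambda>x. f x * g x)"
proof -
  obtain p q where "f = poly p" "g = poly q" using assms unfolding polyfun_def by blast
  then show ?thesis unfolding polyfun_def by (intro exI[of _ "p * q"]) auto
qed

lemma polyfun_power [intro]:
  assumes "polyfun f" shows "polyfun (\<lambda>x. f x ^ k)"
proof -
  obtain p where "f = poly p" using assms unfolding polyfun_def by blast
  then show ?thesis unfolding polyfun_def by (intro exI[of _ "p ^ k"]) auto
qed

lemma polyfun_monom [simp, intro]: "polyfun (\<lambda>x. x ^ m * c)"
  by (intro polyfun_mult polyfun_power polyfun_ident polyfun_const)

lemma polyfun_sum [intro]: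
  assumes "\<And>i. i \<in> S \<Longrightarrow> polyfun (f i)"
  shows "polyfun (\<lambda>x. \<Sum>i\<in>S. f i x)"
proof -
  obtain p where "\<And>i. i \<in> S \<Longrightarrow> f i = poly (p i)" using assms unfolding polyfun_def by metis
  then show ?thesis
    unfolding polyfun_def by (intro exI[of _ "\<Sum>i\<in>S. p i"]) (simp add: poly_sum fun_eq_iff)
qed

lemma polyfun_prod [intro]:
  assumes "\<And>i. i \<in> S \<Longrightarrow> polyfun (f i)"
  shows "polyfun (\<lambda>x. \<Prod>i\<in>S. f i x)"
proof -
  obtain p where "\<And>i. i \<in> S \<Longrightarrow> f i = poly (p i)" using assms unfolding polyfun_def by metis
  then show ?thesis
    unfolding polyfun_def by (intro exI[of _ "\<Prod>i\<in>S. p i"]) (simp add: poly_prod fun_eq_iff)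
qed

lemma polyfun_eqI:
  assumes "polyfun f" "polyfun g" "infinite S" "\<And>x. x \<in> S \<Longrightarrow> f x = g x"
  shows "f = g"
proof -
  obtain p q where pq: "f = poly p" "g = poly q" using assms(1,2) unfolding polyfun_def by blast
  have "S \<subseteq> {x. poly (p - q) x = 0}" using assms(4) pq by auto
  then have "p - q = 0" using assms(3) poly_roots_finite finite_subset by blast
  then show ?thesis using pq by simp
qed

lemma infinite_complex_of_real_Ioc:
  assumes "a < b" shows "infinite (complex_of_real ` {a<..b})"
proof
  assume "finite (complex_of_real ` {a<..b})"
  then have "finite {a<..b}" by (rule finite_imageD) (simp add: inj_on_def)
  then show False using infinite_Ioc[OF assms] by simp
qed

lemma polyfun_eq_polyfun_inverse_const:
  assumes f: "polyfun f" and g: "polyfun g"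
    and eq: "\<And>z. z \<noteq> 0 \<Longrightarrow> f z = g (1/z)"
  shows "f z = f 0"
proof -
  obtain p q where pq: "f = poly p" "g = poly q" using f g unfolding polyfun_def by blast
  let ?m = "degree q"
  have "\<forall>z\<in>UNIV - {0}. poly (monom 1 ?m * p) z = poly (reflect_poly q) z"
    using eq pq by (auto simp: poly_monom poly_reflect_poly_nz field_simps)
  then have "poly (monom 1 ?m * p) = poly (reflect_poly q)"
    by (intro polyfun_eqI[where S = "UNIV - {0}"]) (auto simp: infinite_UNIV_char_0)
  then have e: "monom 1 ?m * p = reflect_poly q" using poly_eq_poly_eq_iff by blast
  have "degree p = 0"
  proof (cases "p = 0")
    case False
    then have "degree (monom (1::complex) ?m * p) = ?m + degree p"
      by (simp add: degree_mult_eq degree_monom_eq)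
    then show ?thesis using e degree_reflect_poly_le[of q] by simp
  qed simp
  then obtain c where "p = [:c:]" using degree_eq_zeroE by blast
  then show ?thesis using pq by simp
qed

lemma coprime_poly_if_no_common_root:
  fixes Q H :: "complex poly"
  assumes "Q \<noteq> 0"
    and no_common_root: "\<And>z. poly Q z = 0 \<Longrightarrow> poly H z = 0 \<Longrightarrow> False"
  shows "coprime Q H"
proof -
  let ?G = "gcd Q H"
  have G0: "?G \<noteq> 0" using assms(1) by simp
  show ?thesis
  proof (cases "constant (poly ?G)")
    case True
    then have "degree ?G = 0" using constant_degree by blast
    then have "is_unit ?G" using is_unit_iff_degree[OF G0] by simp
    then show ?thesis using is_unit_gcd by blast
  next
    case False
    then obtain z where z: "poly ?G z = 0" using fundamental_theorem_of_algebra by blast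
    have "?G dvd Q" "?G dvd H" by auto
    then obtain a b where "Q = ?G * a" "H = ?G * b" by (metis dvdE)
    then have "poly Q z = 0" "poly H z = 0" using z by (metis mult_zero_left poly_mult)+
    then show ?thesis using no_common_root by blast
  qed
qed

text \<open>Clearing denominators turns the identity into \<open>H * P = Q * G\<close> with \<open>H\<close> the reflection of
  \<open>S\<close> times a power of \<open>z\<close>; the roots of \<open>H\<close> lie outside the closed disk, where \<open>Q\<close> has none, so
  \<open>Q\<close> divides \<open>P\<close>, and comparing degrees bounds the quotient.\<close>
lemma poly_dvd_of_disk_nonvanishing:
  fixes P Q S R :: "complex poly" and e f :: nat
  assumes Q: "\<And>z. cmod z \<le> 1 \<Longrightarrow> poly Q z \<noteq> 0"
    and S: "\<And>w. cmod w \<le> 1 \<Longrightarrow> poly S w \<noteq> 0"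
    and eq: "\<And>z. z \<noteq> 0 \<Longrightarrow>
      poly S (1/z) * poly P z * z ^ e = poly Q z * z ^ f * poly R (1/z)"
  obtains T where "P = Q * T" and "T \<noteq> 0 \<Longrightarrow> degree T + e \<le> f"
proof -
  define m where "m = degree S"
  define r where "r = degree R"
  define H where "H = reflect_poly S * monom 1 (r + e)"
  define G where "G = reflect_poly R * monom 1 (m + f)"
  have Q0: "Q \<noteq> 0" using Q[of 0] by auto
  have "reflect_poly S \<noteq> 0" using S[of 0] by (auto simp: poly_0_coeff_0)
  then have H0: "H \<noteq> 0" and dH: "degree H = m + (r + e)"
    using S[of 0] by (auto simp: H_def m_def degree_mult_eq degree_monom_eq poly_0_coeff_0)
  have "poly (H * P) z = poly (Q * G) z" if z: "z \<noteq> 0" for z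
  proof -
    have "(z^m * poly S (1/z)) * poly P z * z ^ (r + e)
        = poly Q z * ((z^r * poly R (1/z)) * z ^ (m + f))"
      using eq[OF z] by (simp add: power_add algebra_simps)
    then show ?thesis using z
      by (simp add: H_def G_def poly_reflect_poly_nz poly_monom inverse_eq_divide m_def r_def
          algebra_simps)
  qed
  then have "poly (H * P) = poly (Q * G)"
    by (intro polyfun_eqI[where S = "UNIV - {0}"]) (auto simp: infinite_UNIV_char_0)
  then have HP: "H * P = Q * G" using poly_eq_poly_eq_iff by blast
  have "coprime Q H"
  proof (rule coprime_poly_if_no_common_root[OF Q0])
    fix z assume Qz: "poly Q z = 0" and Hz: "poly H z = 0"
    then have "z \<noteq> 0" using Q[of 0] by auto
    with Hz have "poly S (1/z) = 0"
      by (simp add: H_def poly_monom poly_reflect_poly_nz inverse_eq_divide)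
    then have "cmod z < 1" using S[of "1/z"] \<open>z \<noteq> 0\<close> by (fastforce simp: norm_divide)
    then show False using Qz Q by auto
  qed
  moreover have "Q dvd H * P" unfolding HP by simp
  ultimately have "Q dvd P" using coprime_dvd_mult_right_iff by (metis mult.commute)
  then obtain T where PT: "P = Q * T" by (auto elim!: dvdE)
  have "degree T + e \<le> f" if "T \<noteq> 0"
  proof -
    have "H * T = G" using HP Q0 unfolding PT by (metis mult.left_commute mult_cancel_left)
    moreover have "degree G \<le> r + (m + f)"
      by (metis G_def degree_monom_le degree_mult_le degree_reflect_poly_le r_def add_mono order_trans)
    moreover have "degree (H * T) = m + (r + e) + degree T"
      using H0 that dH by (simp add: degree_mult_eq)
    ultimately show ?thesis by simp
  qed
  with PT show ?thesis using that by blast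
qed

lemma poly_wiener_hopf_quotient:
  fixes P Q S R :: "complex poly" and ki kj :: int
  assumes Q: "\<And>z. cmod z \<le> 1 \<Longrightarrow> poly Q z \<noteq> 0"
    and S: "\<And>w. cmod w \<le> 1 \<Longrightarrow> poly S w \<noteq> 0"
    and eq: "\<And>z. z \<noteq> 0 \<Longrightarrow>
      poly S (1/z) * poly P z * z powi kj = poly Q z * z powi ki * poly R (1/z)"
  shows "\<exists>T g. P = Q * T \<and> (\<forall>z. z \<noteq> 0 \<longrightarrow> poly T z * z powi (kj - ki) = poly g (1/z))"
proof -
  define mn where "mn = min ki kj"
  define e where "e = nat (kj - mn)"
  define f where "f = nat (ki - mn)"
  have kj: "kj = mn + int e" and ki: "ki = mn + int f" unfolding e_def f_def mn_def by auto
  have pw: "z powi kj = z powi mn * z ^ e" "z powi ki = z powi mn * z ^ f"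
    if "z \<noteq> 0" for z :: complex
    unfolding kj ki using that by (simp_all add: power_int_add)
  have "poly S (1/z) * poly P z * z ^ e = poly Q z * z ^ f * poly R (1/z)" if z: "z \<noteq> 0" for z
    using eq[OF z] z unfolding pw[OF z] by (simp add: algebra_simps)
  then obtain T where PT: "P = Q * T" and dT: "T \<noteq> 0 \<Longrightarrow> degree T + e \<le> f"
    using poly_dvd_of_disk_nonvanishing[OF Q S] by blast
  show ?thesis
  proof (cases "T = 0")
    case True
    then show ?thesis using PT by (intro exI[of _ T] exI[of _ 0]) simp
  next
    case False
    define k where "k = f - e - degree T"
    have kk: "kj - ki = - int (degree T) - int k"
      using dT[OF False] unfolding k_def kj ki by simp
    have "poly T z * z powi (kj - ki) = poly (monom 1 k * reflect_poly T) (1/z)"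
      if z: "z \<noteq> 0" for z
      using z unfolding kk
      by (simp add: power_int_diff power_int_minus poly_monom poly_reflect_poly_nz field_simps)
    then show ?thesis using PT by blast
  qed
qed

section \<open>Matrix-valued polynomial functions and Laurent polynomials\<close>

definition polyfun_mat :: "nat \<Rightarrow> (complex \<Rightarrow> complex mat) \<Rightarrow> bool" where
  "polyfun_mat n M \<longleftrightarrow>
    (\<forall>x. M x \<in> carrier_mat n n) \<and> (\<forall>i<n. \<forall>j<n. polyfun (\<lambda>x. M x $$ (i,j)))"

lemma polyfun_matD:
  "polyfun_mat n M \<Longrightarrow> M x \<in> carrier_mat n n"
  "polyfun_mat n M \<Longrightarrow> i < n \<Longrightarrow> j < n \<Longrightarrow> polyfun (\<lambda>x. M x $$ (i,j))"
  unfolding polyfun_mat_def by auto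

lemma polyfun_mat_mat:
  "(\<And>i j. i < n \<Longrightarrow> j < n \<Longrightarrow> polyfun (\<lambda>x. f x i j)) \<Longrightarrow>
    polyfun_mat n (\<lambda>x. mat n n (\<lambda>(i,j). f x i j))"
  unfolding polyfun_mat_def by auto

lemma polyfun_mat_const: "A \<in> carrier_mat n n \<Longrightarrow> polyfun_mat n (\<lambda>x. A)"
  unfolding polyfun_mat_def by auto

lemma polyfun_mat_mult:
  assumes "polyfun_mat n M" "polyfun_mat n N"
  shows "polyfun_mat n (\<lambda>x. M x * N x)"
proof -
  have c: "M x \<in> carrier_mat n n" "N x \<in> carrier_mat n n" for x using assms polyfun_matD by auto
  have e: "(M x * N x) $$ (i,j) = (\<Sum>k\<in>{0..<n}. M x $$ (i,k) * N x $$ (k,j))"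
    if "i < n" "j < n" for x i j
    using c[of x] that by (simp add: scalar_prod_def)
  show ?thesis unfolding polyfun_mat_def
  proof (intro conjI allI impI)
    fix x show "M x * N x \<in> carrier_mat n n" using c[of x] by auto
  next
    fix i j assume ij: "i < n" "j < n"
    show "polyfun (\<lambda>x. (M x * N x) $$ (i, j))"
      unfolding e[OF ij] using ij assms by (intro polyfun_sum polyfun_mult) (auto intro: polyfun_matD)
  qed
qed

lemma polyfun_mat_add:
  assumes "polyfun_mat n M" "polyfun_mat n N"
  shows "polyfun_mat n (\<lambda>x. M x + N x)"
proof -
  have c: "M x \<in> carrier_mat n n" "N x \<in> carrier_mat n n" for x using assms polyfun_matD by auto
  show ?thesis unfolding polyfun_mat_def
  proof (intro conjI allI impI)
    fix x show "M x + N x \<in> carrier_mat n n" using c[of x] by auto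
  next
    fix i j assume ij: "i < n" "j < n"
    have e: "(M x + N x) $$ (i,j) = M x $$ (i,j) + N x $$ (i,j)" for x using c[of x] ij by simp
    show "polyfun (\<lambda>x. (M x + N x) $$ (i, j))"
      unfolding e using ij assms by (intro polyfun_add) (auto intro: polyfun_matD)
  qed
qed

lemma polyfun_mat_smult:
  assumes "polyfun c" "polyfun_mat n M"
  shows "polyfun_mat n (\<lambda>x. c x \<cdot>\<^sub>m M x)"
proof -
  have cM: "M x \<in> carrier_mat n n" for x using assms polyfun_matD by auto
  show ?thesis unfolding polyfun_mat_def
  proof (intro conjI allI impI)
    fix x show "c x \<cdot>\<^sub>m M x \<in> carrier_mat n n" using cM[of x] by auto
  next
    fix i j assume ij: "i < n" "j < n"
    have e: "(c x \<cdot>\<^sub>m M x) $$ (i,j) = c x * M x $$ (i,j)" for x using cM[of x] ij by simp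
    show "polyfun (\<lambda>x. (c x \<cdot>\<^sub>m M x) $$ (i, j))"
      unfolding e using ij assms by (intro polyfun_mult) (auto intro: polyfun_matD)
  qed
qed

lemma polyfun_det:
  assumes "polyfun_mat n M"
  shows "polyfun (\<lambda>x. det (M x))"
proof -
  have c: "M x \<in> carrier_mat n n" for x using assms polyfun_matD by auto
  have e: "det (M x) =
      (\<Sum>p\<in>{p. p permutes {0..<n}}. of_int (sign p) * (\<Prod>i = 0..<n. M x $$ (i, p i)))" for x
    using det_def'[OF c[of x]] by simp
  show ?thesis unfolding e
  proof (intro polyfun_sum polyfun_mult polyfun_prod polyfun_const)
    fix p i assume "p \<in> {p. p permutes {0..<n}}" "i \<in> {0..<n}"
    then have "p i < n" "i < n" by (auto dest: permutes_in_image)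
    then show "polyfun (\<lambda>x. M x $$ (i, p i))" using assms by (auto intro: polyfun_matD)
  qed
qed

lemma polyfun_mat_delete:
  assumes "polyfun_mat n M" "i < n" "j < n"
  shows "polyfun_mat (n - 1) (\<lambda>x. mat_delete (M x) i j)"
proof -
  have c: "M x \<in> carrier_mat n n" for x using assms polyfun_matD by auto
  have e: "mat_delete (M x) i j = mat (n-1) (n-1)
      (\<lambda>(i',j'). M x $$ (if i' < i then i' else Suc i', if j' < j then j' else Suc j'))" for x
    using c[of x] unfolding mat_delete_def by auto
  show ?thesis unfolding e
    by (rule polyfun_mat_mat) (use assms in \<open>auto intro!: polyfun_matD\<close>)
qed

lemma polyfun_mat_adj:
  assumes "polyfun_mat n M"
  shows "polyfun_mat n (\<lambda>x. adj_mat (M x))"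
proof -
  have c: "M x \<in> carrier_mat n n" for x using assms polyfun_matD by auto
  have e: "adj_mat (M x) = mat n n (\<lambda>(i,j). (-1)^(j+i) * det (mat_delete (M x) j i))" for x
    using c[of x] unfolding adj_mat_def cofactor_def by auto
  show ?thesis unfolding e
    by (rule polyfun_mat_mat, rule polyfun_mult, rule polyfun_const, rule polyfun_det,
        rule polyfun_mat_delete) (use assms in auto)
qed

lemma polyfun_mat_eqI:
  assumes "polyfun_mat n M" "polyfun_mat n N" "infinite S" "\<And>x. x \<in> S \<Longrightarrow> M x = N x"
  shows "M x = N x"
proof (rule eq_matI)
  have c: "M x \<in> carrier_mat n n" "N x \<in> carrier_mat n n" for x using assms polyfun_matD by auto
  fix i j assume "i < dim_row (N x)" "j < dim_col (N x)"
  then have "i < n" "j < n" using c[of x] by auto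
  then have "(\<lambda>x. M x $$ (i, j)) = (\<lambda>x. N x $$ (i, j))"
    using assms by (intro polyfun_eqI[of _ _ S]) (auto intro: polyfun_matD)
  then show "M x $$ (i, j) = N x $$ (i, j)" by meson
next
  have "M x \<in> carrier_mat n n" "N x \<in> carrier_mat n n" using assms polyfun_matD by auto
  then show "dim_row (M x) = dim_row (N x)" "dim_col (M x) = dim_col (N x)" by auto
qed

lemma leval_superset:
  assumes "finite S" "lsupp n C \<subseteq> S"
  shows "leval n C z = mat n n (\<lambda>(i,j). \<Sum>k\<in>S. z powi k * C k $$ (i,j))"
  unfolding leval_def
proof (intro cong_mat refl, clarify)
  fix i j assume "i < n" "j < n"
  then show "(\<Sum>k\<in>lsupp n C. z powi k * C k $$ (i,j)) = (\<Sum>k\<in>S. z powi k * C k $$ (i,j))"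
    by (intro sum.mono_neutral_left[OF assms]) (auto simp: lsupp_def)
qed

lemma leval_inv_superset:
  assumes "finite S" "lsupp n C \<subseteq> S"
  shows "leval_inv n C w = mat n n (\<lambda>(i,j). \<Sum>k\<in>S. w ^ nat (- k) * C k $$ (i,j))"
  unfolding leval_inv_def
proof (intro cong_mat refl, clarify)
  fix i j assume "i < n" "j < n"
  then show "(\<Sum>k\<in>lsupp n C. w ^ nat (- k) * C k $$ (i,j)) = (\<Sum>k\<in>S. w ^ nat (- k) * C k $$ (i,j))"
    by (intro sum.mono_neutral_left[OF assms]) (auto simp: lsupp_def)
qed

lemma leval_carrier[simp]: "leval n C z \<in> carrier_mat n n"
  by (simp add: leval_def)
lemma leval_inv_carrier[simp]: "leval_inv n C z \<in> carrier_mat n n"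
  by (simp add: leval_inv_def)

lemma lsupp_pos: "is_poly_pos n C \<Longrightarrow> k \<in> lsupp n C \<Longrightarrow> k \<ge> 0"
  unfolding is_poly_pos_def lsupp_def by (meson mem_Collect_eq not_le)
lemma lsupp_neg: "is_poly_neg n C \<Longrightarrow> k \<in> lsupp n C \<Longrightarrow> k \<le> 0"
  unfolding is_poly_neg_def lsupp_def by (meson mem_Collect_eq not_le)

lemma polyfun_mat_leval:
  assumes "is_poly_pos n C"
  shows "polyfun_mat n (leval n C)"
  unfolding leval_def
proof (rule polyfun_mat_mat, rule polyfun_sum)
  fix i j k assume "k \<in> lsupp n C"
  then have "(\<lambda>z. z powi k * C k $$ (i, j)) = (\<lambda>z. z ^ nat k * C k $$ (i, j))"
    using lsupp_pos[OF assms] by (simp add: power_int_def fun_eq_iff)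
  then show "polyfun (\<lambda>z. z powi k * C k $$ (i, j))" by auto
qed

lemma polyfun_mat_leval_inv: "polyfun_mat n (leval_inv n C)"
  unfolding leval_inv_def by (rule polyfun_mat_mat, rule polyfun_sum) auto

lemma leval_eq_leval_inv:
  assumes "is_poly_neg n C" "z \<noteq> 0"
  shows "leval n C z = leval_inv n C (1/z)"
  unfolding leval_def leval_inv_def
proof (intro cong_mat refl, clarify, rule sum.cong[OF refl])
  fix i j k assume "k \<in> lsupp n C"
  then have k: "k \<le> 0" using lsupp_neg[OF assms(1)] by auto
  show "z powi k * C k $$ (i, j) = (1 / z) ^ nat (- k) * C k $$ (i, j)"
    using k by (cases "k = 0") (auto simp: power_int_def inverse_eq_divide)
qed

definition leval_inv_poly :: "nat \<Rightarrow> (int \<Rightarrow> complex mat) \<Rightarrow> nat \<Rightarrow> nat \<Rightarrow> complex poly" where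
  "leval_inv_poly n C i j = (\<Sum>k\<in>lsupp n C. monom (C k $$ (i,j)) (nat (- k)))"

lemma poly_leval_inv_poly:
  "i < n \<Longrightarrow> j < n \<Longrightarrow> poly (leval_inv_poly n C i j) w = leval_inv n C w $$ (i,j)"
  unfolding leval_inv_poly_def leval_inv_def by (simp add: poly_sum poly_monom mult.commute)

lemma coeff_leval_inv_poly:
  assumes C: "is_poly_neg n C" and ij: "i < n" "j < n"
  shows "coeff (leval_inv_poly n C i j) m = C (- int m) $$ (i,j)"
proof -
  have "coeff (leval_inv_poly n C i j) m = (\<Sum>k\<in>lsupp n C. if k = - int m then C k $$ (i,j) else 0)"
    unfolding leval_inv_poly_def coeff_sum coeff_monom
    by (intro sum.cong refl) (use lsupp_neg[OF C] in force)
  also have "\<dots> = C (- int m) $$ (i,j)"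
    using C ij by (auto simp: lsupp_def is_poly_neg_def is_laurent_def)
  finally show ?thesis .
qed

lemma poly_neg_eqI:
  assumes C: "is_poly_neg n C" and C': "is_poly_neg n C'"
    and eq: "\<And>w. leval_inv n C w = leval_inv n C' w"
  shows "C = C'"
proof
  fix k
  have car: "C k \<in> carrier_mat n n" "C' k \<in> carrier_mat n n"
    using C C' by (auto simp: is_poly_neg_def is_laurent_def)
  show "C k = C' k"
  proof (cases "k \<le> 0")
    case True
    show ?thesis
    proof (rule eq_matI)
      fix i j assume "i < dim_row (C' k)" "j < dim_col (C' k)"
      then have ij: "i < n" "j < n" using car by auto
      have "poly (leval_inv_poly n C i j) = poly (leval_inv_poly n C' i j)"
        using eq ij by (simp add: fun_eq_iff poly_leval_inv_poly)
      then have "coeff (leval_inv_poly n C i j) (nat (- k)) = coeff (leval_inv_poly n C' i j) (nat (- k))"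
        by (simp add: poly_eq_poly_eq_iff)
      then show "C k $$ (i,j) = C' k $$ (i,j)"
        using True by (simp add: coeff_leval_inv_poly[OF C ij] coeff_leval_inv_poly[OF C' ij])
    qed (use car in auto)
  qed (use C C' in \<open>simp add: is_poly_neg_def\<close>)
qed

lemma polyfun_mat_ex_poly_neg:
  assumes "polyfun_mat n M"
  shows "\<exists>C. is_poly_neg n C \<and> (\<forall>w. leval_inv n C w = M w)"
proof -
  obtain p where p: "\<And>i j. i < n \<Longrightarrow> j < n \<Longrightarrow> (\<lambda>w. M w $$ (i,j)) = poly (p i j)"
    using assms unfolding polyfun_mat_def polyfun_def by metis
  define N where "N = (\<Sum>i<n. \<Sum>j<n. degree (p i j))"
  have dN: "degree (p i j) \<le> N" if "i < n" "j < n" for i j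
  proof -
    have "degree (p i j) \<le> (\<Sum>j<n. degree (p i j))" using that by (intro member_le_sum) auto
    also have "\<dots> \<le> N" unfolding N_def using that by (intro member_le_sum) auto
    finally show ?thesis .
  qed
  define C where "C k = mat n n (\<lambda>(i,j). if k \<le> 0 then coeff (p i j) (nat (- k)) else 0)" for k :: int
  have "coeff (p i j) m = 0" if "i < n" "j < n" "N < m" for i j m
    by (rule coeff_eq_0) (use dN[OF that(1,2)] that(3) in linarith)
  then have zero: "C k = 0\<^sub>m n n" if "k > 0 \<or> N < nat (- k)" for k
    using that by (intro eq_matI) (auto simp: C_def)
  then have "lsupp n C \<subseteq> uminus ` int ` {..N}"
    by (force simp: lsupp_def image_iff not_less intro: exI[of _ "nat (- _)"])
  then have "finite (lsupp n C)" by (rule finite_subset) simp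
  with zero have C_neg: "is_poly_neg n C" by (auto simp: is_poly_neg_def is_laurent_def C_def)
  have "leval_inv n C w = M w" for w
  proof (rule eq_matI)
    fix i j assume "i < dim_row (M w)" "j < dim_col (M w)"
    then have ij: "i < n" "j < n" using polyfun_matD(1)[OF assms, of w] by auto
    have "leval_inv_poly n C i j = p i j"
      by (rule poly_eqI) (simp add: coeff_leval_inv_poly[OF C_neg ij] C_def ij)
    then show "leval_inv n C w $$ (i, j) = M w $$ (i, j)"
      using poly_leval_inv_poly[OF ij, of C w] p[OF ij] by metis
  qed (use polyfun_matD(1)[OF assms, of w] in \<open>auto simp: leval_inv_def\<close>)
  with C_neg show ?thesis by blast
qed

lemma mult_mat_lincomb:
  fixes f :: "'k \<Rightarrow> complex"
  assumes U: "U \<in> carrier_mat n n" and B: "\<forall>k. B k \<in> carrier_mat n n"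
  shows "U * mat n n (\<lambda>(i,j). \<Sum>k\<in>S. f k * B k $$ (i,j))
    = mat n n (\<lambda>(i,j). \<Sum>k\<in>S. f k * (U * B k) $$ (i,j))" (is "?L = ?R")
proof (rule eq_matI)
  fix i j assume "i < dim_row ?R" "j < dim_col ?R"
  then have ij: "i < n" "j < n" by auto
  have B_dim [simp]: "dim_row (B k) = n" "dim_col (B k) = n" for k using B by auto
  have "?L $$ (i,j) = (\<Sum>a\<in>{0..<n}. U $$ (i,a) * (\<Sum>k\<in>S. f k * B k $$ (a,j)))"
    using U ij by (simp add: scalar_prod_def)
  also have "\<dots> = (\<Sum>k\<in>S. f k * (\<Sum>a\<in>{0..<n}. U $$ (i,a) * B k $$ (a,j)))"
    by (simp add: sum_distrib_left mult_ac sum.swap[of _ "{0..<n}"])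
  also have "\<dots> = ?R $$ (i,j)"
    using U ij by (simp add: scalar_prod_def)
  finally show "?L $$ (i,j) = ?R $$ (i,j)" .
qed (use U in auto)

lemma mat_lincomb_mult:
  fixes f :: "'k \<Rightarrow> complex"
  assumes U: "U \<in> carrier_mat n n" and B: "\<forall>k. B k \<in> carrier_mat n n"
  shows "mat n n (\<lambda>(i,j). \<Sum>k\<in>S. f k * B k $$ (i,j)) * U
    = mat n n (\<lambda>(i,j). \<Sum>k\<in>S. f k * (B k * U) $$ (i,j))" (is "?L = ?R")
proof (rule eq_matI)
  fix i j assume "i < dim_row ?R" "j < dim_col ?R"
  then have ij: "i < n" "j < n" by auto
  have B_dim [simp]: "dim_row (B k) = n" "dim_col (B k) = n" for k using B by auto
  have "?L $$ (i,j) = (\<Sum>a\<in>{0..<n}. (\<Sum>k\<in>S. f k * B k $$ (i,a)) * U $$ (a,j))"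
    using U ij by (simp add: scalar_prod_def)
  also have "\<dots> = (\<Sum>k\<in>S. f k * (\<Sum>a\<in>{0..<n}. B k $$ (i,a) * U $$ (a,j)))"
    by (simp add: sum_distrib_left sum_distrib_right mult_ac sum.swap[of _ "{0..<n}"])
  also have "\<dots> = ?R $$ (i,j)"
    using U ij by (simp add: scalar_prod_def)
  finally show "?L $$ (i,j) = ?R $$ (i,j)" .
qed (use U in auto)

lemma cnj_mat_lincomb:
  fixes f :: "'k \<Rightarrow> complex"
  assumes "\<forall>k. B k \<in> carrier_mat n n"
  shows "map_mat cnj (mat n n (\<lambda>(i,j). \<Sum>k\<in>S. f k * B k $$ (i,j)))
    = mat n n (\<lambda>(i,j). \<Sum>k\<in>S. cnj (f k) * map_mat cnj (B k) $$ (i,j))"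
proof -
  have Bd[simp]: "dim_row (B k) = n" "dim_col (B k) = n" for k using assms by auto
  show ?thesis by (intro eq_matI) (auto simp: cnj_sum)
qed

lemma leval_lincomb:
  assumes C: "\<forall>k. C k \<in> carrier_mat n n" "finite (lsupp n C)"
    and C': "\<forall>k. C' k \<in> carrier_mat n n" "finite (lsupp n C')"
  shows "leval n (\<lambda>k. a \<cdot>\<^sub>m C k + b \<cdot>\<^sub>m C' k) z = a \<cdot>\<^sub>m leval n C z + b \<cdot>\<^sub>m leval n C' z"
proof -
  let ?S = "lsupp n C \<union> lsupp n C'"
  have f: "finite ?S" using C(2) C'(2) by simp
  have sub: "lsupp n (\<lambda>k. a \<cdot>\<^sub>m C k + b \<cdot>\<^sub>m C' k) \<subseteq> ?S"
    by (auto simp: lsupp_def)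
  have [simp]: "dim_row (C k) = n" "dim_col (C k) = n" "dim_row (C' k) = n" "dim_col (C' k) = n" for k
    using C(1) C'(1) by auto
  show ?thesis
    unfolding leval_superset[OF f sub] leval_superset[OF f Un_upper1] leval_superset[OF f Un_upper2]
    by (intro eq_matI) (auto simp: sum_distrib_left sum.distrib algebra_simps)
qed

lemma cnj_powi: "cnj (z powi k) = cnj z powi k"
  by (cases "k \<ge> 0") (auto simp: power_int_def)

lemma smult_smult_mat [simp]: "a \<cdot>\<^sub>m (b \<cdot>\<^sub>m A) = (a * b) \<cdot>\<^sub>m (A :: 'a :: semigroup_mult mat)"
  by (intro eq_matI) (auto simp: mult.assoc)

lemma one_smult_mat [simp]: "1 \<cdot>\<^sub>m A = (A :: 'a :: monoid_mult mat)"
  by (intro eq_matI) auto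

lemma cnj_cnj_mat [simp]: "map_mat cnj (map_mat cnj X) = X"
  by (intro eq_matI) auto

lemma cnj_zero_mat [simp]: "map_mat cnj (0\<^sub>m n m) = 0\<^sub>m n m"
  by (intro eq_matI) auto

interpretation cnj_hom: comm_ring_hom cnj
  by unfold_locales auto

lemma diag_pow_carrier [simp]: "diag_pow ks z \<in> carrier_mat (length ks) (length ks)"
  unfolding diag_pow_def by auto

lemma diag_pow_dim [simp]: "dim_row (diag_pow ks z) = length ks" "dim_col (diag_pow ks z) = length ks"
  unfolding diag_pow_def by auto

lemma diag_pow_mult:
  assumes X: "X \<in> carrier_mat (length ks) m" and ij: "i < length ks" "j < m"
  shows "(diag_pow ks z * X) $$ (i,j) = z powi (ks!i) * X $$ (i,j)"
proof -
  have "(diag_pow ks z * X) $$ (i,j) = (\<Sum>k\<in>{0..<length ks}. diag_pow ks z $$ (i,k) * X $$ (k,j))"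
    using X ij by (simp add: scalar_prod_def)
  also have "\<dots> = (\<Sum>k\<in>{0..<length ks}. if k = i then z powi (ks!i) * X $$ (k,j) else 0)"
    using ij by (intro sum.cong) (auto simp: diag_pow_def)
  finally show ?thesis using ij by simp
qed

lemma mult_diag_pow:
  assumes X: "X \<in> carrier_mat m (length ks)" and ij: "i < m" "j < length ks"
  shows "(X * diag_pow ks z) $$ (i,j) = X $$ (i,j) * z powi (ks!j)"
proof -
  have "(X * diag_pow ks z) $$ (i,j) = (\<Sum>k\<in>{0..<length ks}. X $$ (i,k) * diag_pow ks z $$ (k,j))"
    using X ij by (simp add: scalar_prod_def)
  also have "\<dots> = (\<Sum>k\<in>{0..<length ks}. if k = j then X $$ (i,k) * z powi (ks!j) else 0)"
    using ij by (intro sum.cong) (auto simp: diag_pow_def)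
  finally show ?thesis using ij by simp
qed

lemma det_diag_pow_nonzero:
  assumes "z \<noteq> 0"
  shows "det (diag_pow ks z) \<noteq> 0"
proof -
  have "upper_triangular (diag_pow ks z)" unfolding upper_triangular_def diag_pow_def by auto
  then have "det (diag_pow ks z) = (\<Prod>i = 0..<length ks. z powi (ks ! i))"
    using det_upper_triangular[OF _ diag_pow_carrier] by (simp add: prod_list_diag_prod diag_pow_def)
  then show ?thesis using assms by simp
qed

lemma cnj_diag_pow: "map_mat cnj (diag_pow ks z) = diag_pow ks (cnj z)"
  unfolding diag_pow_def by (intro eq_matI) (auto simp: cnj_powi)

lemma smult_mat_cancel:
  fixes A B :: "complex mat"
  assumes "c \<noteq> 0" "c \<cdot>\<^sub>m A = c \<cdot>\<^sub>m B" "A \<in> carrier_mat n m" "B \<in> carrier_mat n m"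
  shows "A = B"
proof (rule eq_matI)
  fix i j assume "i < dim_row B" "j < dim_col B"
  then have "c * A $$ (i,j) = c * B $$ (i,j)"
    using arg_cong[OF assms(2), of "\<lambda>M. M $$ (i,j)"] assms(3,4) by auto
  then show "A $$ (i,j) = B $$ (i,j)" using assms(1) by simp
qed (use assms in auto)

lemma mult_left_cancel_mat:
  fixes X :: "complex mat"
  assumes X: "X \<in> carrier_mat n n" and dX: "det X \<noteq> 0"
    and Y: "Y \<in> carrier_mat n m" and Y': "Y' \<in> carrier_mat n m" and eq: "X * Y = X * Y'"
  shows "Y = Y'"
proof (rule smult_mat_cancel[OF dX _ Y Y'])
  note adj = adj_mat[OF X]
  have "det X \<cdot>\<^sub>m Y = adj_mat X * (X * Y)"
    using adj X Y by (simp add: assoc_mult_mat[of _ n n _ n _ m, symmetric] mult_smult_assoc_mat[of _ n n _ m])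
  also have "\<dots> = det X \<cdot>\<^sub>m Y'" unfolding eq
    using adj X Y' by (simp add: assoc_mult_mat[of _ n n _ n _ m, symmetric] mult_smult_assoc_mat[of _ n n _ m])
  finally show "det X \<cdot>\<^sub>m Y = det X \<cdot>\<^sub>m Y'" .
qed

lemma det_adj_mat_nonzero:
  fixes Z :: "complex mat"
  assumes Z: "Z \<in> carrier_mat n n" and dZ: "det Z \<noteq> 0"
  shows "det (adj_mat Z) \<noteq> 0"
proof -
  have "det Z * det (adj_mat Z) = det (det Z \<cdot>\<^sub>m 1\<^sub>m n)"
    using det_mult[OF Z adj_mat(1)[OF Z]] adj_mat(2)[OF Z] by simp
  also have "\<dots> = det Z ^ n" by simp
  finally show ?thesis using dZ by auto
qed

lemma factorization_adj_identity:
  fixes X1 X2 DD Y1 Y2 :: "complex mat"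
  assumes c: "X1 \<in> carrier_mat n n" "X2 \<in> carrier_mat n n" "DD \<in> carrier_mat n n"
    "Y1 \<in> carrier_mat n n" "Y2 \<in> carrier_mat n n"
  and eq: "X1 * DD * Y1 = X2 * DD * Y2"
  shows "det X1 \<cdot>\<^sub>m (DD * (Y1 * adj_mat Y2)) = det Y2 \<cdot>\<^sub>m ((adj_mat X1 * X2) * DD)"
proof -
  note aX = adj_mat[OF c(1)] and aY = adj_mat[OF c(5)]
  note as = assoc_mult_mat[of _ n n _ n _ n]
  note sm = mult_smult_distrib[of _ n n _ n] mult_smult_assoc_mat[of _ n n _ n]
  have "adj_mat X1 * (X1 * DD * Y1) * adj_mat Y2 = (adj_mat X1 * X1) * (DD * (Y1 * adj_mat Y2))"
    using c aX(1) aY(1) by (simp add: as)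
  also have "\<dots> = det X1 \<cdot>\<^sub>m (DD * (Y1 * adj_mat Y2))"
    unfolding aX(3) using c aX(1) aY(1) by (simp add: sm)
  finally have 1: "adj_mat X1 * (X1 * DD * Y1) * adj_mat Y2 = det X1 \<cdot>\<^sub>m (DD * (Y1 * adj_mat Y2))" .
  have "adj_mat X1 * (X2 * DD * Y2) * adj_mat Y2 = ((adj_mat X1 * X2) * DD) * (Y2 * adj_mat Y2)"
    using c aX(1) aY(1) by (simp add: as)
  also have "\<dots> = det Y2 \<cdot>\<^sub>m ((adj_mat X1 * X2) * DD)"
    unfolding aY(2) using c aX(1) aY(1) by (simp add: sm)
  finally have 2: "adj_mat X1 * (X2 * DD * Y2) * adj_mat Y2 = det Y2 \<cdot>\<^sub>m ((adj_mat X1 * X2) * DD)" .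
  show ?thesis using 1 2 eq by simp
qed

lemma factorization_change_of_factors:
  fixes X Y DD Z M :: "complex mat"
  assumes c: "X \<in> carrier_mat n n" "Y \<in> carrier_mat n n" "DD \<in> carrier_mat n n"
    "Z \<in> carrier_mat n n" "M \<in> carrier_mat n n"
  and YD: "Y * DD = DD * Z" and dZ: "det Z = cc" and cc: "cc \<noteq> 0"
  shows "X * Y * DD * ((1/cc) \<cdot>\<^sub>m (adj_mat Z * M)) = X * DD * M"
proof -
  note aZ = adj_mat[OF c(4)]
  note as = assoc_mult_mat[of _ n n _ n _ n]
  note sm = mult_smult_distrib[of _ n n _ n] mult_smult_assoc_mat[of _ n n _ n]
  have "X * Y * DD * ((1/cc) \<cdot>\<^sub>m (adj_mat Z * M)) = (1/cc) \<cdot>\<^sub>m (X * (Y * DD) * (adj_mat Z * M))"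
    using c aZ(1) by (simp add: as sm)
  also have "\<dots> = (1/cc) \<cdot>\<^sub>m (X * DD * ((Z * adj_mat Z) * M))"
    unfolding YD using c aZ(1) by (simp add: as)
  also have "\<dots> = X * DD * M"
    unfolding aZ(2) dZ using c aZ(1) cc by (simp add: as sm)
  finally show ?thesis .
qed

text \<open>\<open>a + \<bar>a\<bar> \<lambda> = 0\<close> iff \<open>\<lambda> = - a / \<bar>a\<bar>\<close> (the bar meaning conjugation), and for
  \<open>a = 1 + \<i> t\<close> these values are pairwise distinct, so some real \<open>t\<close> avoids the finitely
  many eigenvalues of \<open>W0\<close>.\<close>
lemma exists_det_add_cnj_smult_nonzero:
  fixes W0 :: "complex mat"
  assumes W0: "W0 \<in> carrier_mat n n"
  shows "\<exists>a. det (a \<cdot>\<^sub>m 1\<^sub>m n + cnj a \<cdot>\<^sub>m W0) \<noteq> 0"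
proof -
  let ?cp = "char_poly W0"
  have "coeff ?cp n = 1" using degree_monic_char_poly[OF W0] by simp
  then have cp0: "?cp \<noteq> 0" by auto
  define f :: "real \<Rightarrow> complex" where "f t = - (1 + \<i> * t) / (1 - \<i> * t)" for t
  have nz: "1 - \<i> * of_real t \<noteq> 0" for t by (simp add: complex_eq_iff)
  have "inj f"
  proof
    fix s t assume "f s = f t"
    then have "(1 + \<i> * s) * (1 - \<i> * t) = (1 + \<i> * t) * (1 - \<i> * s)"
      using nz[of s] nz[of t] unfolding f_def by (simp add: field_simps)
    then have "2 * \<i> * (of_real s - of_real t) = 0" by (simp add: algebra_simps)
    then show "s = t" by simp
  qed
  have "finite (f -` {x. poly ?cp x = 0})"
    using poly_roots_finite[OF cp0] \<open>inj f\<close> by (intro finite_vimageI) auto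
  then obtain t where t: "t \<notin> f -` {x. poly ?cp x = 0}"
    using ex_new_if_finite[OF infinite_UNIV_char_0[where 'a=real]] by blast
  define a where "a = 1 + \<i> * of_real t"
  have ca: "cnj a = 1 - \<i> * of_real t" unfolding a_def by simp
  have ca0: "cnj a \<noteq> 0" unfolding ca by (rule nz)
  have "\<not> eigenvalue W0 (f t)" using t eigenvalue_root_char_poly[OF W0] by auto
  then have d: "det (char_matrix W0 (f t)) \<noteq> 0" using eigenvalue_det[OF W0] by auto
  have "a \<cdot>\<^sub>m 1\<^sub>m n + cnj a \<cdot>\<^sub>m W0 = cnj a \<cdot>\<^sub>m char_matrix W0 (f t)"
  proof (rule eq_matI)
    fix i j assume "i < dim_row (cnj a \<cdot>\<^sub>m char_matrix W0 (f t))"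
      "j < dim_col (cnj a \<cdot>\<^sub>m char_matrix W0 (f t))"
    then have ij: "i < n" "j < n" using W0 by (auto simp: char_matrix_def)
    have "cnj a * (- f t) = a" unfolding f_def ca a_def using nz[of t] by (simp add: field_simps)
    then have "a = - (cnj a * f t)" by simp
    then have "a + cnj a * f t = 0" using eq_neg_iff_add_eq_0 by blast
    then show "(a \<cdot>\<^sub>m 1\<^sub>m n + cnj a \<cdot>\<^sub>m W0) $$ (i,j) = (cnj a \<cdot>\<^sub>m char_matrix W0 (f t)) $$ (i,j)"
      using ij W0 by (auto simp: char_matrix_def algebra_simps)
  qed (use W0 in \<open>auto simp: char_matrix_def\<close>)
  then have "det (a \<cdot>\<^sub>m 1\<^sub>m n + cnj a \<cdot>\<^sub>m W0) = cnj a ^ n * det (char_matrix W0 (f t))"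
    using W0 by (simp add: char_matrix_def)
  then have "det (a \<cdot>\<^sub>m 1\<^sub>m n + cnj a \<cdot>\<^sub>m W0) \<noteq> 0" using d ca0 by simp
  then show ?thesis by blast
qed

section \<open>Uniqueness of Wiener--Hopf factors\<close>

lemma diag_pow_factorization_entry:
  assumes c: "X1 \<in> carrier_mat n n" "X2 \<in> carrier_mat n n" "Y1 \<in> carrier_mat n n" "Y2 \<in> carrier_mat n n"
    and len: "length ks = n" and ij: "i < n" "j < n"
    and eq: "X1 * diag_pow ks z * Y1 = X2 * diag_pow ks z * Y2"
  shows "det X1 * (z powi (ks!i) * (Y1 * adj_mat Y2) $$ (i,j))
       = det Y2 * ((adj_mat X1 * X2) $$ (i,j) * z powi (ks!j))"
proof -
  have D: "diag_pow ks z \<in> carrier_mat n n" using len by auto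
  have car: "Y1 * adj_mat Y2 \<in> carrier_mat n n" "adj_mat X1 * X2 \<in> carrier_mat n n"
    using c adj_mat(1) by (metis mult_carrier_mat)+
  have "det X1 * (diag_pow ks z * (Y1 * adj_mat Y2)) $$ (i,j)
      = det Y2 * (adj_mat X1 * X2 * diag_pow ks z) $$ (i,j)"
  proof -
    have "dim_row (diag_pow ks z * (Y1 * adj_mat Y2)) = n" "dim_col (diag_pow ks z * (Y1 * adj_mat Y2)) = n"
      "dim_row (adj_mat X1 * X2 * diag_pow ks z) = n" "dim_col (adj_mat X1 * X2 * diag_pow ks z) = n"
      using car D by auto
    then show ?thesis
      using arg_cong[OF factorization_adj_identity[OF c(1,2) D c(3,4) eq], of "\<lambda>M. M $$ (i,j)"] ij
      by simp
  qed
  moreover have "(diag_pow ks z * (Y1 * adj_mat Y2)) $$ (i,j) = z powi (ks!i) * (Y1 * adj_mat Y2) $$ (i,j)"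
    by (rule diag_pow_mult) (use car ij len in auto)
  moreover have "(adj_mat X1 * X2 * diag_pow ks z) $$ (i,j) = (adj_mat X1 * X2) $$ (i,j) * z powi (ks!j)"
    by (rule mult_diag_pow) (use car ij len in auto)
  ultimately show ?thesis by simp
qed

lemma mult_eq_if_adj_mult_eq:
  fixes P Q W :: "complex mat"
  assumes P: "P \<in> carrier_mat n n" and Q: "Q \<in> carrier_mat n n" and W: "W \<in> carrier_mat n n"
    and dP: "det P \<noteq> 0" and eq: "adj_mat P * Q = det P \<cdot>\<^sub>m W"
  shows "P * W = Q"
proof (rule smult_mat_cancel[OF dP _ _ Q])
  have "det P \<cdot>\<^sub>m (P * W) = P * (adj_mat P * Q)"
    using P W by (simp add: eq mult_smult_distrib[of _ n n _ n])
  also have "\<dots> = det P \<cdot>\<^sub>m Q"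
    using P Q adj_mat[OF P]
    by (simp add: assoc_mult_mat[of _ n n _ n _ n, symmetric] mult_smult_assoc_mat[of _ n n _ n])
  finally show "det P \<cdot>\<^sub>m (P * W) = det P \<cdot>\<^sub>m Q" .
qed (use P W in auto)

lemma diag_pow_mult_eq_mult_diag_pow:
  assumes V: "V \<in> carrier_mat n n" and W: "W \<in> carrier_mat n n" and len: "length ks = n"
    and entries: "\<And>i j. i < n \<Longrightarrow> j < n \<Longrightarrow> z powi (ks!i) * V $$ (i,j) = W $$ (i,j) * z powi (ks!j)"
  shows "diag_pow ks z * V = W * diag_pow ks z"
proof (rule eq_matI)
  fix i j assume "i < dim_row (W * diag_pow ks z)" "j < dim_col (W * diag_pow ks z)"
  then have ij: "i < n" "j < n" using W len by auto
  have "(diag_pow ks z * V) $$ (i,j) = z powi (ks!i) * V $$ (i,j)"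
    by (rule diag_pow_mult) (use V ij len in auto)
  moreover have "(W * diag_pow ks z) $$ (i,j) = W $$ (i,j) * z powi (ks!j)"
    by (rule mult_diag_pow) (use W ij len in auto)
  ultimately show "(diag_pow ks z * V) $$ (i,j) = (W * diag_pow ks z) $$ (i,j)"
    using entries[OF ij] by simp
qed (use V W len in auto)

text \<open>Entrywise, \<open>adj P1 \<cdot> P2 \<cdot> D\<close> and \<open>D \<cdot> M1 \<cdot> adj M2\<close> agree up to the scalars \<open>det P1\<close> and
  \<open>det M2\<close>, which are zero-free on the closed disk, so \<open>poly_wiener_hopf_quotient\<close> applies.\<close>
lemma wh_transition_entries:
  fixes P1 P2 M1 M2 :: "complex \<Rightarrow> complex mat"
  assumes P1: "polyfun_mat n P1" and P2: "polyfun_mat n P2"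
    and M1: "polyfun_mat n M1" and M2: "polyfun_mat n M2" and len: "length ks = n"
    and P1_det: "\<And>z. cmod z \<le> 1 \<Longrightarrow> det (P1 z) \<noteq> 0"
    and M2_det: "\<And>w. cmod w \<le> 1 \<Longrightarrow> det (M2 w) \<noteq> 0"
    and eq: "\<And>z. z \<noteq> 0 \<Longrightarrow> P1 z * diag_pow ks z * M1 (1/z) = P2 z * diag_pow ks z * M2 (1/z)"
    and ij: "i < n" "j < n"
  shows "\<exists>T g. (\<forall>z. (adj_mat (P1 z) * P2 z) $$ (i,j) = det (P1 z) * poly T z) \<and>
    (\<forall>z. z \<noteq> 0 \<longrightarrow> poly T z * z powi (ks!j - ks!i) = poly g (1/z))"
proof -
  have car: "P1 z \<in> carrier_mat n n" "P2 z \<in> carrier_mat n n" "M1 z \<in> carrier_mat n n"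
    "M2 z \<in> carrier_mat n n" for z
    using P1 P2 M1 M2 by (auto dest: polyfun_matD(1))
  obtain Q where Q: "(\<lambda>z. det (P1 z)) = poly Q"
    using polyfun_det[OF P1] unfolding polyfun_def by blast
  obtain S where S: "(\<lambda>w. det (M2 w)) = poly S"
    using polyfun_det[OF M2] unfolding polyfun_def by blast
  obtain p where p: "(\<lambda>z. (adj_mat (P1 z) * P2 z) $$ (i,j)) = poly p"
    using polyfun_matD(2)[OF polyfun_mat_mult[OF polyfun_mat_adj[OF P1] P2] ij]
    unfolding polyfun_def by blast
  obtain r where r: "(\<lambda>w. (M1 w * adj_mat (M2 w)) $$ (i,j)) = poly r"
    using polyfun_matD(2)[OF polyfun_mat_mult[OF M1 polyfun_mat_adj[OF M2]] ij]
    unfolding polyfun_def by blast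
  have Q_nz: "poly Q z \<noteq> 0" if "cmod z \<le> 1" for z using P1_det[OF that] fun_cong[OF Q, of z] by simp
  have S_nz: "poly S w \<noteq> 0" if "cmod w \<le> 1" for w using M2_det[OF that] fun_cong[OF S, of w] by simp
  have scalar: "poly S (1/z) * poly p z * z powi (ks!j) = poly Q z * z powi (ks!i) * poly r (1/z)"
    if "z \<noteq> 0" for z
  proof -
    have "poly Q z * (z powi (ks!i) * poly r (1/z)) = poly S (1/z) * (poly p z * z powi (ks!j))"
      using diag_pow_factorization_entry[OF car(1,2) car(3,4) len ij eq[OF that]]
      by (simp only: fun_cong[OF Q] fun_cong[OF S] fun_cong[OF p] fun_cong[OF r])
    then show ?thesis by (simp only: mult.assoc)
  qed
  have "\<exists>T g. p = Q * T \<and> (\<forall>z. z \<noteq> 0 \<longrightarrow> poly T z * z powi (ks!j - ks!i) = poly g (1/z))"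
    by (rule poly_wiener_hopf_quotient[OF Q_nz S_nz scalar])
  then obtain T g where pT: "p = Q * T"
    and g: "\<forall>z. z \<noteq> 0 \<longrightarrow> poly T z * z powi (ks!j - ks!i) = poly g (1/z)"
    by blast
  have "(adj_mat (P1 z) * P2 z) $$ (i,j) = det (P1 z) * poly T z" for z
    using fun_cong[OF p, of z] fun_cong[OF Q, of z] unfolding pT by simp
  with g show ?thesis by blast
qed

lemma wh_transition_matrix:
  fixes P1 P2 M1 M2 :: "complex \<Rightarrow> complex mat"
  assumes P1: "polyfun_mat n P1" and P2: "polyfun_mat n P2"
    and M1: "polyfun_mat n M1" and M2: "polyfun_mat n M2" and len: "length ks = n"
    and P1_det: "\<And>z. cmod z \<le> 1 \<Longrightarrow> det (P1 z) \<noteq> 0"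
    and M2_det: "\<And>w. cmod w \<le> 1 \<Longrightarrow> det (M2 w) \<noteq> 0"
    and eq: "\<And>z. z \<noteq> 0 \<Longrightarrow> P1 z * diag_pow ks z * M1 (1/z) = P2 z * diag_pow ks z * M2 (1/z)"
  shows "\<exists>W V. polyfun_mat n W \<and> polyfun_mat n V \<and> (\<forall>z. P1 z * W z = P2 z) \<and>
    (\<forall>z. z \<noteq> 0 \<longrightarrow> diag_pow ks z * V (1/z) = W z * diag_pow ks z)"
proof -
  have entries: "\<exists>T g. (\<forall>z. (adj_mat (P1 z) * P2 z) $$ (i,j) = det (P1 z) * poly T z) \<and>
      (\<forall>z. z \<noteq> 0 \<longrightarrow> poly T z * z powi (ks!j - ks!i) = poly g (1/z))" if "i < n" "j < n" for i j
    using P1 P2 M1 M2 len P1_det M2_det eq that by (rule wh_transition_entries)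
  define T where "T i j = (SOME T. \<exists>g. (\<forall>z. (adj_mat (P1 z) * P2 z) $$ (i,j) = det (P1 z) * poly T z) \<and>
    (\<forall>z. z \<noteq> 0 \<longrightarrow> poly T z * z powi (ks!j - ks!i) = poly g (1/z)))" for i j
  define g where "g i j = (SOME g. \<forall>z. z \<noteq> 0 \<longrightarrow> poly (T i j) z * z powi (ks!j - ks!i) = poly g (1/z))"
    for i j
  have Tg: "(\<forall>z. (adj_mat (P1 z) * P2 z) $$ (i,j) = det (P1 z) * poly (T i j) z) \<and>
    (\<forall>z. z \<noteq> 0 \<longrightarrow> poly (T i j) z * z powi (ks!j - ks!i) = poly (g i j) (1/z))" if "i < n" "j < n" for i j
  proof -
    have "\<exists>g. (\<forall>z. (adj_mat (P1 z) * P2 z) $$ (i,j) = det (P1 z) * poly (T i j) z) \<and>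
        (\<forall>z. z \<noteq> 0 \<longrightarrow> poly (T i j) z * z powi (ks!j - ks!i) = poly g (1/z))"
      unfolding T_def by (rule someI_ex[OF entries[OF that]])
    then obtain g' where T: "\<forall>z. (adj_mat (P1 z) * P2 z) $$ (i,j) = det (P1 z) * poly (T i j) z"
      and g': "\<forall>z. z \<noteq> 0 \<longrightarrow> poly (T i j) z * z powi (ks!j - ks!i) = poly g' (1/z)"
      by blast
    have "\<forall>z. z \<noteq> 0 \<longrightarrow> poly (T i j) z * z powi (ks!j - ks!i) = poly (g i j) (1/z)"
      unfolding g_def by (rule someI_ex) (use g' in blast)
    with T show ?thesis by blast
  qed
  define W where "W z = mat n n (\<lambda>(i,j). poly (T i j) z)" for z
  define V where "V w = mat n n (\<lambda>(i,j). poly (g i j) w)" for w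
  have W_car: "W z \<in> carrier_mat n n" and V_car: "V z \<in> carrier_mat n n" for z
    by (simp_all add: W_def V_def)
  have polyfun_W: "polyfun_mat n W" and polyfun_V: "polyfun_mat n V"
    unfolding W_def V_def by (simp_all add: polyfun_mat_mat)
  have car: "P1 z \<in> carrier_mat n n" "P2 z \<in> carrier_mat n n" for z
    using P1 P2 by (auto dest: polyfun_matD(1))
  have "P1 z * W z = P2 z" if "cmod z \<le> 1" for z
  proof (rule mult_eq_if_adj_mult_eq[OF car W_car P1_det[OF that]])
    show "adj_mat (P1 z) * P2 z = det (P1 z) \<cdot>\<^sub>m W z"
    proof (rule eq_matI)
      fix i j assume "i < dim_row (det (P1 z) \<cdot>\<^sub>m W z)" "j < dim_col (det (P1 z) \<cdot>\<^sub>m W z)"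
      then have ij: "i < n" "j < n" by (simp_all add: W_def)
      then show "(adj_mat (P1 z) * P2 z) $$ (i,j) = (det (P1 z) \<cdot>\<^sub>m W z) $$ (i,j)"
        using Tg[OF ij] by (simp add: W_def)
    qed (use adj_mat(1)[OF car(1)[of z]] car(2)[of z] W_car[of z] in auto)
  qed
  then have "P1 z * W z = P2 z" for z
    by (rule polyfun_mat_eqI[OF polyfun_mat_mult[OF P1 polyfun_W] P2
          infinite_complex_of_real_Ioc[of 0 1, simplified]]) auto
  moreover have "diag_pow ks z * V (1/z) = W z * diag_pow ks z" if z: "z \<noteq> 0" for z
  proof (rule diag_pow_mult_eq_mult_diag_pow[OF V_car W_car len])
    fix i j assume ij: "i < n" "j < n"
    have "poly (T i j) z * z powi (ks!j) = poly (T i j) z * z powi (ks!j - ks!i) * z powi (ks!i)"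
      using z by (simp add: mult.assoc power_int_add[symmetric])
    then show "z powi (ks!i) * V (1/z) $$ (i,j) = W z $$ (i,j) * z powi (ks!j)"
      using Tg[OF ij] z ij by (simp add: W_def V_def mult.commute)
  qed
  ultimately show ?thesis using polyfun_W polyfun_V by blast
qed

lemma mult_affine_comm:
  fixes X B C :: "complex mat"
  assumes X: "X \<in> carrier_mat n n" and B: "B \<in> carrier_mat n n" and C: "C \<in> carrier_mat n n"
    and XB: "X * B = C * X"
  shows "X * (a \<cdot>\<^sub>m 1\<^sub>m n + b \<cdot>\<^sub>m B) = (a \<cdot>\<^sub>m 1\<^sub>m n + b \<cdot>\<^sub>m C) * X"
proof -
  have "X * (a \<cdot>\<^sub>m 1\<^sub>m n + b \<cdot>\<^sub>m B) = a \<cdot>\<^sub>m X + b \<cdot>\<^sub>m (X * B)"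
    using X B by (simp add: mult_add_distrib_mat[of _ n n _ n] mult_smult_distrib[of _ n n _ n])
  also have "\<dots> = (a \<cdot>\<^sub>m 1\<^sub>m n + b \<cdot>\<^sub>m C) * X"
    unfolding XB using X C by (simp add: add_mult_distrib_mat[of _ n n _ _ n] mult_smult_assoc_mat[of _ n n _ n])
  finally show ?thesis .
qed

text \<open>\<open>det Y\<close> is a polynomial in \<open>z\<close> and \<open>det Z\<close> one in \<open>z\<^sup>-\<^sup>1\<close>, and they agree for \<open>z \<noteq> 0\<close>.\<close>
lemma det_const_if_diag_pow_similar:
  assumes Y: "polyfun_mat n Y" and Z: "polyfun_mat n Z" and len: "length ks = n"
    and sim: "\<And>z. z \<noteq> 0 \<Longrightarrow> diag_pow ks z * Z (1/z) = Y z * diag_pow ks z"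
  shows "det (Y z) = det (Y 0)" and "det (Z w) = det (Y 0)"
proof -
  have car: "Y z \<in> carrier_mat n n" "Z z \<in> carrier_mat n n" "diag_pow ks z \<in> carrier_mat n n" for z
    using Y Z len by (auto dest: polyfun_matD(1))
  have det_eq: "det (Z (1/z)) = det (Y z)" if z: "z \<noteq> 0" for z
  proof -
    have "det (diag_pow ks z) * det (Z (1/z)) = det (Y z) * det (diag_pow ks z)"
      using arg_cong[OF sim[OF z], of det] det_mult[OF car(3) car(2)] det_mult[OF car(1) car(3)] by simp
    then show ?thesis using det_diag_pow_nonzero[OF z] by simp
  qed
  show Y_const: "det (Y z) = det (Y 0)" for z
    by (rule polyfun_eq_polyfun_inverse_const[OF polyfun_det[OF Y] polyfun_det[OF Z]]) (use det_eq in simp)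
  have Z_const: "det (Z w) = det (Z 0)" for w
  proof (rule polyfun_eq_polyfun_inverse_const[OF polyfun_det[OF Z] polyfun_det[OF Y]])
    fix z :: complex assume "z \<noteq> 0"
    then show "det (Z z) = det (Y (1/z))" using det_eq[of "1/z"] by simp
  qed
  have "det (Z 0) = det (Y 0)" using Z_const[of 1] det_eq[of 1] Y_const[of 1] by simp
  then show "det (Z w) = det (Y 0)" using Z_const[of w] by simp
qed

lemma minus_factor_mult_inverse:
  assumes M: "minus_factor n M" and Z: "polyfun_mat n Z"
    and det_Z: "\<And>w. det (Z w) = c" and c: "c \<noteq> 0"
  shows "\<exists>M'. minus_factor n M' \<and> (\<forall>w. leval_inv n M' w = (1/c) \<cdot>\<^sub>m (adj_mat (Z w) * leval_inv n M w))"
proof -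
  have Z_car: "Z w \<in> carrier_mat n n" for w using Z by (rule polyfun_matD(1))
  have "polyfun_mat n (\<lambda>w. (1/c) \<cdot>\<^sub>m (adj_mat (Z w) * leval_inv n M w))"
    by (intro polyfun_mat_smult polyfun_mat_mult polyfun_mat_adj Z polyfun_mat_leval_inv) simp
  from polyfun_mat_ex_poly_neg[OF this] obtain M' where M'_neg: "is_poly_neg n M'"
    and M'_eval: "\<forall>w. leval_inv n M' w = (1/c) \<cdot>\<^sub>m (adj_mat (Z w) * leval_inv n M w)"
    by blast
  have "det (leval_inv n M' w) \<noteq> 0" if "cmod w \<le> 1" for w
  proof -
    have adj: "adj_mat (Z w) \<in> carrier_mat n n" using adj_mat(1)[OF Z_car] .
    have "det (leval_inv n M' w) = (1/c) ^ n * (det (adj_mat (Z w)) * det (leval_inv n M w))"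
      using M'_eval det_mult[OF adj leval_inv_carrier] adj carrier_matD[OF leval_inv_carrier[of n M w]] by simp
    moreover have "det (adj_mat (Z w)) \<noteq> 0" using det_adj_mat_nonzero[OF Z_car] det_Z c by simp
    moreover have "det (leval_inv n M w) \<noteq> 0" using M that by (simp add: minus_factor_def)
    ultimately show ?thesis using c by simp
  qed
  with M'_neg M'_eval show ?thesis by (auto simp: minus_factor_def)
qed

section \<open>Antilinear involutions and invariant factorizations\<close>

text \<open>The antilinear involution \<open>X \<mapsto> J X\<^sup>* J\<close> (entrywise conjugation) whose fixed points are
  the real matrices (\<open>J = 1\<close>) or the quaternionic ones (\<open>J = I \<otimes> \<sigma>\<^sub>y\<close>).\<close>
locale conj_twist =
  fixes n :: nat and J :: "complex mat" and e :: complex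
  assumes J_carrier [simp]: "J \<in> carrier_mat n n"
    and J_J: "J * J = 1\<^sub>m n"
    and cnj_J: "map_mat cnj J = e \<cdot>\<^sub>m J"
    and e_e: "e * e = 1"
begin

definition twist :: "complex mat \<Rightarrow> complex mat" where
  "twist X = J * map_mat cnj X * J"

lemma mult_carrier_n [simp]:
  "A \<in> carrier_mat n n \<Longrightarrow> B \<in> carrier_mat n n \<Longrightarrow> A * B \<in> carrier_mat n n"
  by (rule mult_carrier_mat)

lemma mult_zero_n [simp]:
  "A \<in> carrier_mat n n \<Longrightarrow> A * 0\<^sub>m n n = 0\<^sub>m n n"
  "A \<in> carrier_mat n n \<Longrightarrow> 0\<^sub>m n n * A = 0\<^sub>m n n"
  by auto

declare smult_carrier_mat [simp]

lemmas assoc_n = assoc_mult_mat[of _ n n _ n _ n]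
lemmas smult_n = mult_smult_distrib[of _ n n _ n] mult_smult_assoc_mat[of _ n n _ n]

lemma J_J_left: "Z \<in> carrier_mat n n \<Longrightarrow> J * (J * Z) = Z"
  by (simp add: assoc_n[symmetric] J_J)

lemma twist_carrier [simp]: "X \<in> carrier_mat n n \<Longrightarrow> twist X \<in> carrier_mat n n"
  unfolding twist_def by simp

lemma twist_mult:
  assumes X: "X \<in> carrier_mat n n" and Y: "Y \<in> carrier_mat n n"
  shows "twist (X * Y) = twist X * twist Y"
proof -
  have [simp]: "map_mat cnj X \<in> carrier_mat n n" "map_mat cnj Y \<in> carrier_mat n n" using X Y by auto
  have "twist X * twist Y = J * (map_mat cnj X * (J * (J * (map_mat cnj Y * J))))"
    unfolding twist_def using X Y by (simp add: assoc_n)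
  also have "\<dots> = J * (map_mat cnj X * (map_mat cnj Y * J))"
    using X Y by (simp add: J_J_left)
  also have "\<dots> = twist (X * Y)"
    unfolding twist_def using cnj_hom.mat_hom_mult[OF X Y] X Y by (simp add: assoc_n)
  finally show ?thesis by simp
qed

lemma twist_twist:
  assumes X: "X \<in> carrier_mat n n"
  shows "twist (twist X) = X"
proof -
  have [simp]: "map_mat cnj X \<in> carrier_mat n n" "map_mat cnj J \<in> carrier_mat n n" using X by auto
  have "map_mat cnj (twist X) = map_mat cnj J * X * map_mat cnj J"
    unfolding twist_def using X
    by (simp add: cnj_hom.mat_hom_mult[of _ n n _ n])
  also have "\<dots> = (e * e) \<cdot>\<^sub>m (J * X * J)"
    unfolding cnj_J using X by (simp add: smult_n)
  finally have e: "map_mat cnj (twist X) = J * X * J" by (simp add: e_e)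
  have "twist (twist X) = J * map_mat cnj (twist X) * J" by (simp add: twist_def)
  also have "\<dots> = J * (J * (X * (J * J)))"
    unfolding e using X by (simp add: assoc_n)
  also have "\<dots> = X" using X by (simp add: J_J_left J_J)
  finally show ?thesis .
qed

lemma twist_det:
  assumes X: "X \<in> carrier_mat n n"
  shows "det (twist X) = cnj (det X)"
proof -
  have "det J * det J = 1" using det_mult[OF J_carrier J_carrier] unfolding J_J by simp
  then show ?thesis unfolding twist_def using X by (simp add: det_mult[of _ n] cnj_hom.hom_det)
qed

lemma twist_zero [simp]: "twist (0\<^sub>m n n) = 0\<^sub>m n n"
  unfolding twist_def by simp

lemma twist_zero_iff:
  assumes X: "X \<in> carrier_mat n n"
  shows "twist X = 0\<^sub>m n n \<longleftrightarrow> X = 0\<^sub>m n n"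
  using twist_twist[OF X] by auto

lemma twist_lincomb:
  assumes X: "X \<in> carrier_mat n n" and Y: "Y \<in> carrier_mat n n"
  shows "twist (a \<cdot>\<^sub>m X + b \<cdot>\<^sub>m Y) = cnj a \<cdot>\<^sub>m twist X + cnj b \<cdot>\<^sub>m twist Y"
proof -
  have [simp]: "map_mat cnj X \<in> carrier_mat n n" "map_mat cnj Y \<in> carrier_mat n n" using X Y by auto
  have e: "map_mat cnj (a \<cdot>\<^sub>m X + b \<cdot>\<^sub>m Y) = cnj a \<cdot>\<^sub>m map_mat cnj X + cnj b \<cdot>\<^sub>m map_mat cnj Y"
    using X Y by (intro eq_matI) auto
  have "J * (cnj a \<cdot>\<^sub>m map_mat cnj X + cnj b \<cdot>\<^sub>m map_mat cnj Y) * J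
     = (J * (cnj a \<cdot>\<^sub>m map_mat cnj X) + J * (cnj b \<cdot>\<^sub>m map_mat cnj Y)) * J"
    using X Y by (subst mult_add_distrib_mat[of _ n n _ n]) auto
  also have "\<dots> = J * (cnj a \<cdot>\<^sub>m map_mat cnj X) * J + J * (cnj b \<cdot>\<^sub>m map_mat cnj Y) * J"
    using X Y by (subst add_mult_distrib_mat[of _ n n _ _ n]) auto
  also have "\<dots> = cnj a \<cdot>\<^sub>m (J * map_mat cnj X * J) + cnj b \<cdot>\<^sub>m (J * map_mat cnj Y * J)"
    using X Y by (simp add: smult_n)
  finally show ?thesis unfolding twist_def e .
qed

lemma lsupp_twist: "\<forall>k. C k \<in> carrier_mat n n \<Longrightarrow> lsupp n (\<lambda>k. twist (C k)) = lsupp n C"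
  unfolding lsupp_def using twist_zero_iff by auto

lemma twist_mat_lincomb:
  assumes B: "\<forall>k. B k \<in> carrier_mat n n"
  shows "twist (mat n n (\<lambda>(i,j). \<Sum>k\<in>S. f k * B k $$ (i,j)))
    = mat n n (\<lambda>(i,j). \<Sum>k\<in>S. cnj (f k) * twist (B k) $$ (i,j))"
proof -
  have cB: "\<forall>k. map_mat cnj (B k) \<in> carrier_mat n n" and cB': "\<forall>k. J * map_mat cnj (B k) \<in> carrier_mat n n"
    using B by auto
  show ?thesis
    unfolding twist_def cnj_mat_lincomb[OF B] mult_mat_lincomb[OF J_carrier cB]
      mat_lincomb_mult[OF J_carrier cB'] ..
qed

lemma leval_twist:
  assumes C: "\<forall>k. C k \<in> carrier_mat n n" "finite (lsupp n C)"
  shows "leval n (\<lambda>k. twist (C k)) z = twist (leval n C (cnj z))"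
  unfolding leval_superset[OF C(2) subset_refl] twist_mat_lincomb[OF C(1)]
    leval_superset[OF C(2) equalityD1[OF lsupp_twist[OF C(1)]]]
  by (simp add: cnj_powi)

lemma leval_inv_twist:
  assumes C: "\<forall>k. C k \<in> carrier_mat n n" "finite (lsupp n C)"
  shows "leval_inv n (\<lambda>k. twist (C k)) w = twist (leval_inv n C (cnj w))"
  unfolding leval_inv_superset[OF C(2) subset_refl] twist_mat_lincomb[OF C(1)]
    leval_inv_superset[OF C(2) equalityD1[OF lsupp_twist[OF C(1)]]]
  by simp

lemma twist_diag_pow:
  assumes "length ks = n" and "J * diag_pow ks (cnj z) = diag_pow ks (cnj z) * J"
  shows "twist (diag_pow ks z) = diag_pow ks (cnj z)"
proof -
  have D: "diag_pow ks (cnj z) \<in> carrier_mat n n" using assms(1) by auto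
  have "twist (diag_pow ks z) = diag_pow ks (cnj z) * J * J"
    unfolding twist_def cnj_diag_pow assms(2) ..
  also have "\<dots> = diag_pow ks (cnj z)" using D by (simp add: assoc_n J_J right_mult_one_mat)
  finally show ?thesis .
qed

lemma is_laurent_twist: "is_laurent n C \<Longrightarrow> is_laurent n (\<lambda>k. twist (C k))"
  unfolding is_laurent_def using lsupp_twist by simp

lemma is_poly_pos_twist: "is_poly_pos n P \<Longrightarrow> is_poly_pos n (\<lambda>k. twist (P k))"
  unfolding is_poly_pos_def using is_laurent_twist by simp

lemma is_poly_neg_twist: "is_poly_neg n M \<Longrightarrow> is_poly_neg n (\<lambda>k. twist (M k))"
  unfolding is_poly_neg_def using is_laurent_twist by simp

lemma minus_factor_twist:
  assumes M: "minus_factor n M"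
  shows "minus_factor n (\<lambda>k. twist (M k))"
proof -
  have "det (leval_inv n (\<lambda>k. twist (M k)) w) \<noteq> 0" if "cmod w \<le> 1" for w
    using M that unfolding minus_factor_def is_poly_neg_def is_laurent_def
    by (simp add: leval_inv_twist twist_det)
  then show ?thesis using M is_poly_neg_twist by (simp add: minus_factor_def)
qed

lemma twisted_factorization:
  assumes A: "is_laurent n A" "\<And>k. twist (A k) = A k"
    and P: "is_laurent n P" and M: "is_laurent n M"
    and D: "\<And>z. twist (D z) = D (cnj z)" "\<And>z. D z \<in> carrier_mat n n"
    and fac: "\<And>z. z \<noteq> 0 \<Longrightarrow> leval n A z = leval n P z * D z * leval n M z"
    and z: "z \<noteq> 0"
  shows "leval n A z = leval n (\<lambda>k. twist (P k)) z * D z * leval n (\<lambda>k. twist (M k)) z"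
proof -
  have "leval n A z = leval n (\<lambda>k. twist (A k)) z" using A(2) by simp
  also have "\<dots> = twist (leval n P (cnj z) * D (cnj z) * leval n M (cnj z))"
    using A(1) z unfolding is_laurent_def by (simp add: leval_twist fac)
  also have "\<dots> = leval n (\<lambda>k. twist (P k)) z * D z * leval n (\<lambda>k. twist (M k)) z"
    using P M D unfolding is_laurent_def by (simp add: twist_mult leval_twist)
  finally show ?thesis .
qed

lemma twist_invariant_minus_factor:
  assumes A: "is_laurent n A" "\<And>k. twist (A k) = A k"
    and P: "plus_factor n P" "\<And>k. twist (P k) = P k" and M: "is_poly_neg n M"
    and D: "\<And>z. twist (D z) = D (cnj z)" "\<And>z. D z \<in> carrier_mat n n" "\<And>z. z \<noteq> 0 \<Longrightarrow> det (D z) \<noteq> 0"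
    and fac: "\<And>z. z \<noteq> 0 \<Longrightarrow> leval n A z = leval n P z * D z * leval n M z"
  shows "twist (M k) = M k"
proof -
  let ?M' = "\<lambda>k. twist (M k)"
  have P_lau: "is_laurent n P" using P(1) by (simp add: plus_factor_def is_poly_pos_def)
  have M_lau: "is_laurent n M" using M by (simp add: is_poly_neg_def)
  have M'_neg: "is_poly_neg n ?M'" using M by (rule is_poly_neg_twist)
  have "leval_inv n ?M' w = leval_inv n M w" if "w \<in> complex_of_real ` {1<..2}" for w
  proof -
    have w: "w \<noteq> 0" "cmod (1/w) \<le> 1" using that by (auto simp: norm_divide)
    let ?PD = "leval n P (1/w) * D (1/w)"
    have PD: "?PD \<in> carrier_mat n n" using D(2) by simp
    have det_PD: "det ?PD \<noteq> 0"
      using P(1) w D(3)[of "1/w"] det_mult[OF leval_carrier D(2)] by (simp add: plus_factor_def)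
    have "?PD * leval n ?M' (1/w) = ?PD * leval n M (1/w)"
      using twisted_factorization[OF A P_lau M_lau D(1,2) fac, of "1/w"] fac[of "1/w"] w P(2) by simp
    then have "leval n ?M' (1/w) = leval n M (1/w)"
      by (rule mult_left_cancel_mat[OF PD det_PD leval_carrier leval_carrier])
    then show ?thesis using w(1) by (simp add: leval_eq_leval_inv[OF M'_neg] leval_eq_leval_inv[OF M])
  qed
  then have "leval_inv n ?M' w = leval_inv n M w" for w
    by (rule polyfun_mat_eqI[OF polyfun_mat_leval_inv polyfun_mat_leval_inv
          infinite_complex_of_real_Ioc[of 1 2, simplified]])
  then have "?M' = M" by (rule poly_neg_eqI[OF M'_neg M])
  then show ?thesis by (rule fun_cong)
qed

definition twist_average :: "complex \<Rightarrow> (int \<Rightarrow> complex mat) \<Rightarrow> int \<Rightarrow> complex mat" where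
  "twist_average a P k = a \<cdot>\<^sub>m P k + cnj a \<cdot>\<^sub>m twist (P k)"

lemma twist_twist_average:
  assumes "P k \<in> carrier_mat n n"
  shows "twist (twist_average a P k) = twist_average a P k"
proof -
  have "twist (twist_average a P k) = cnj a \<cdot>\<^sub>m twist (P k) + a \<cdot>\<^sub>m P k"
    unfolding twist_average_def using assms by (simp add: twist_lincomb twist_twist)
  also have "\<dots> = twist_average a P k"
    unfolding twist_average_def using assms by (intro comm_add_mat[of _ n n]) auto
  finally show ?thesis .
qed

lemma is_poly_pos_twist_average:
  assumes "is_poly_pos n P"
  shows "is_poly_pos n (twist_average a P)"
proof -
  have P: "\<forall>k. P k \<in> carrier_mat n n" "finite (lsupp n P)" "\<And>k. k < 0 \<Longrightarrow> P k = 0\<^sub>m n n"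
    using assms by (auto simp: is_poly_pos_def is_laurent_def)
  have zero: "twist_average a P k = 0\<^sub>m n n" if "P k = 0\<^sub>m n n" for k
    using that by (intro eq_matI) (auto simp: twist_average_def)
  then have "lsupp n (twist_average a P) \<subseteq> lsupp n P" by (auto simp: lsupp_def)
  then have "finite (lsupp n (twist_average a P))" using P(2) by (rule finite_subset)
  then show ?thesis
    using P zero by (auto simp: is_poly_pos_def is_laurent_def twist_average_def)
qed

lemma twist_average_plus_factor:
  assumes P: "plus_factor n P" and W: "\<And>z. W z \<in> carrier_mat n n"
    and PW: "\<And>z. leval n P z * W z = leval n (\<lambda>k. twist (P k)) z"
    and det_Y: "\<And>z. det (a \<cdot>\<^sub>m 1\<^sub>m n + cnj a \<cdot>\<^sub>m W z) = c" and c: "c \<noteq> 0"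
  shows "plus_factor n (twist_average a P)" and "\<And>k. twist (twist_average a P k) = twist_average a P k"
    and "\<And>z. leval n (twist_average a P) z = leval n P z * (a \<cdot>\<^sub>m 1\<^sub>m n + cnj a \<cdot>\<^sub>m W z)"
proof -
  have pos: "is_poly_pos n P" and P_car: "\<forall>k. P k \<in> carrier_mat n n" and fin: "finite (lsupp n P)"
    using P by (auto simp: plus_factor_def is_poly_pos_def is_laurent_def)
  show eval: "leval n (twist_average a P) z = leval n P z * (a \<cdot>\<^sub>m 1\<^sub>m n + cnj a \<cdot>\<^sub>m W z)" for z
  proof -
    have "leval n (twist_average a P) z = a \<cdot>\<^sub>m leval n P z + cnj a \<cdot>\<^sub>m leval n (\<lambda>k. twist (P k)) z"
      unfolding twist_average_def
      by (rule leval_lincomb) (use P_car fin lsupp_twist in auto)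
    also have "\<dots> = leval n P z * (a \<cdot>\<^sub>m 1\<^sub>m n + cnj a \<cdot>\<^sub>m W z)"
      unfolding PW[symmetric] using W[of z] right_mult_one_mat[OF leval_carrier[of n P z]]
      by (simp add: mult_add_distrib_mat[of _ n n _ n] mult_smult_distrib[of _ n n _ n])
    finally show ?thesis .
  qed
  have "det (leval n (twist_average a P) z) \<noteq> 0" if "cmod z \<le> 1" for z
    using P that c W[of z] by (simp add: eval det_mult[of _ n] det_Y plus_factor_def)
  then show "plus_factor n (twist_average a P)"
    using is_poly_pos_twist_average[OF pos] by (simp add: plus_factor_def)
  show "twist (twist_average a P k) = twist_average a P k" for k
    using P_car by (simp add: twist_twist_average)
qed

lemma wh_transition_matrix_twist:
  assumes A: "is_laurent n A" "\<And>k. twist (A k) = A k"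
    and len: "length ks = n" and D_twist: "\<And>z. twist (diag_pow ks z) = diag_pow ks (cnj z)"
    and P1: "plus_factor n P1" and M1: "minus_factor n M1"
    and fac: "\<And>z. z \<noteq> 0 \<Longrightarrow> leval n A z = leval n P1 z * diag_pow ks z * leval n M1 z"
  shows "\<exists>W V. polyfun_mat n W \<and> polyfun_mat n V \<and>
    (\<forall>z. leval n P1 z * W z = leval n (\<lambda>k. twist (P1 k)) z) \<and>
    (\<forall>z. z \<noteq> 0 \<longrightarrow> diag_pow ks z * V (1/z) = W z * diag_pow ks z)"
proof -
  let ?D = "diag_pow ks" and ?P2 = "\<lambda>k. twist (P1 k)" and ?M2 = "\<lambda>k. twist (M1 k)"
  have P1_pos: "is_poly_pos n P1" and M1_neg: "is_poly_neg n M1"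
    using P1 M1 by (simp_all add: plus_factor_def minus_factor_def)
  have D_car: "?D z \<in> carrier_mat n n" for z using len by auto
  have "leval n P1 z * ?D z * leval_inv n M1 (1/z) = leval n ?P2 z * ?D z * leval_inv n ?M2 (1/z)"
    if "z \<noteq> 0" for z
    using fac[OF that] twisted_factorization[OF A _ _ D_twist D_car fac that] P1_pos M1_neg
      leval_eq_leval_inv[OF M1_neg that] leval_eq_leval_inv[OF is_poly_neg_twist[OF M1_neg] that]
    by (simp add: is_poly_pos_def is_poly_neg_def)
  then show ?thesis
    using P1 minus_factor_twist[OF M1]
    by (intro wh_transition_matrix[OF polyfun_mat_leval[OF P1_pos]
          polyfun_mat_leval[OF is_poly_pos_twist[OF P1_pos]] polyfun_mat_leval_inv polyfun_mat_leval_inv len])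
      (auto simp: plus_factor_def minus_factor_def)
qed

lemma twist_invariant_wh_factorization:
  assumes A: "is_laurent n A" "\<And>k. twist (A k) = A k"
    and len: "length ks = n" and J_D: "\<And>z. J * diag_pow ks z = diag_pow ks z * J"
    and P1: "plus_factor n P1" and M1: "minus_factor n M1"
    and fac: "\<And>z. z \<noteq> 0 \<Longrightarrow> leval n A z = leval n P1 z * diag_pow ks z * leval n M1 z"
  shows "\<exists>P M. plus_factor n P \<and> minus_factor n M \<and> (\<forall>k. twist (P k) = P k) \<and> (\<forall>k. twist (M k) = M k) \<and>
    (\<forall>z. z \<noteq> 0 \<longrightarrow> leval n A z = leval n P z * diag_pow ks z * leval n M z)"
proof -
  let ?D = "diag_pow ks"
  have D_car: "?D z \<in> carrier_mat n n" for z using len by auto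
  have D_twist: "twist (?D z) = ?D (cnj z)" for z using twist_diag_pow[OF len J_D] .
  obtain W V where W: "polyfun_mat n W" and V: "polyfun_mat n V"
    and PW: "\<forall>z. leval n P1 z * W z = leval n (\<lambda>k. twist (P1 k)) z"
    and DV: "\<forall>z. z \<noteq> 0 \<longrightarrow> ?D z * V (1/z) = W z * ?D z"
    using wh_transition_matrix_twist[OF A len D_twist P1 M1 fac] by blast
  have W_car: "W z \<in> carrier_mat n n" and V_car: "V z \<in> carrier_mat n n" for z
    using W V by (simp_all add: polyfun_matD(1))
  obtain a where a: "det (a \<cdot>\<^sub>m 1\<^sub>m n + cnj a \<cdot>\<^sub>m W 0) \<noteq> 0"
    using exists_det_add_cnj_smult_nonzero[OF W_car] by blast
  define Y where "Y z = a \<cdot>\<^sub>m 1\<^sub>m n + cnj a \<cdot>\<^sub>m W z" for z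
  define Z where "Z w = a \<cdot>\<^sub>m 1\<^sub>m n + cnj a \<cdot>\<^sub>m V w" for w
  have Y: "polyfun_mat n Y" and Z: "polyfun_mat n Z"
    unfolding Y_def Z_def by (intro polyfun_mat_add polyfun_mat_smult polyfun_mat_const W V; simp)+
  have DZ: "?D z * Z (1/z) = Y z * ?D z" if "z \<noteq> 0" for z
    unfolding Y_def Z_def using DV that D_car W_car V_car by (intro mult_affine_comm) auto
  define c where "c = det (Y 0)"
  have det_Y: "det (Y z) = c" and det_Z: "det (Z w) = c" for z w
    unfolding c_def using det_const_if_diag_pow_similar[OF Y Z len DZ] by blast+
  have c: "c \<noteq> 0" using a by (simp add: c_def Y_def)
  note P = twist_average_plus_factor[OF P1 W_car PW[rule_format] det_Y[unfolded Y_def] c]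
  obtain M where M: "minus_factor n M"
    and M_eval: "\<forall>w. leval_inv n M w = (1/c) \<cdot>\<^sub>m (adj_mat (Z w) * leval_inv n M1 w)"
    using minus_factor_mult_inverse[OF M1 Z det_Z c] by blast
  have fac': "leval n A z = leval n (twist_average a P1) z * ?D z * leval n M z" if z: "z \<noteq> 0" for z
  proof -
    have "leval n (twist_average a P1) z * ?D z * leval n M z
        = leval n P1 z * Y z * ?D z * ((1/c) \<cdot>\<^sub>m (adj_mat (Z (1/z)) * leval_inv n M1 (1/z)))"
      using M_eval leval_eq_leval_inv[OF _ z] M P(3) by (simp add: Y_def minus_factor_def)
    also have "\<dots> = leval n A z"
      using factorization_change_of_factors[OF leval_carrier _ D_car _ leval_inv_carrier DZ[OF z, symmetric]]
        fac[OF z] leval_eq_leval_inv[OF _ z] M1 det_Z c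
      by (simp add: Y_def Z_def W_car V_car minus_factor_def)
    finally show ?thesis by simp
  qed
  have "twist (M k) = M k" for k
    by (rule twist_invariant_minus_factor[OF A P(1,2) _ D_twist D_car det_diag_pow_nonzero fac'])
      (use M in \<open>simp add: minus_factor_def\<close>)
  then show ?thesis using P M fac' by blast
qed

end

section \<open>Real and quaternionic structure\<close>

text \<open>The nonzero entries of \<open>Jq d = I \<otimes> \<sigma>\<^sub>y\<close> are at \<open>(i, partner i)\<close>, with value
  \<open>partner_sign i\<close>.\<close>
definition partner :: "nat \<Rightarrow> nat" where
  "partner i = (if even i then Suc i else i - 1)"

definition partner_sign :: "nat \<Rightarrow> complex" where
  "partner_sign i = (if even i then - \<i> else \<i>)"

lemma parity_cases:
  fixes i :: nat
  obtains a where "i = 2*a" | a where "i = 2*a + 1"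
  by (metis evenE oddE)

lemma partner_even [simp]: "partner (2*a) = 2*a + 1"
  unfolding partner_def by simp

lemma partner_odd [simp]: "partner (2*a+1) = 2*a" "partner (Suc (2*a)) = 2*a"
  unfolding partner_def by simp_all

lemma partner_sign_even [simp]: "partner_sign (2*a) = - \<i>"
  unfolding partner_sign_def by simp

lemma partner_sign_odd [simp]: "partner_sign (2*a+1) = \<i>" "partner_sign (Suc (2*a)) = \<i>"
  unfolding partner_sign_def by simp_all

lemma partner_lt: "i < 2*d \<Longrightarrow> partner i < 2*d"
  by (cases i rule: parity_cases) auto

lemma partner_partner [simp]: "partner (partner i) = i"
  by (cases i rule: parity_cases) auto

lemma partner_div [simp]: "partner i div 2 = i div 2"
  by (cases i rule: parity_cases) auto

lemma partner_eq_iff: "partner i = j \<longleftrightarrow> i = partner j"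
  by (metis partner_partner)

lemma partner_sign_partner: "partner_sign i * partner_sign (partner i) = 1"
  unfolding partner_sign_def partner_def by auto

lemma Jq_carrier [simp]: "Jq d \<in> carrier_mat (2*d) (2*d)"
  unfolding Jq_def by auto

lemma Jq_dim [simp]: "dim_row (Jq d) = 2*d" "dim_col (Jq d) = 2*d"
  unfolding Jq_def by auto

lemma Jq_entry:
  assumes ij: "i < 2*d" "j < 2*d"
  shows "Jq d $$ (i,j) = (if j = partner i then partner_sign i else 0)"
proof -
  have "(if i div 2 = j div 2 then
      (if i mod 2 = 0 \<and> j mod 2 = 1 then - \<i> else if i mod 2 = 1 \<and> j mod 2 = 0 then \<i> else 0)
    else 0) = (if j = partner i then partner_sign i else 0)"
    by (cases i rule: parity_cases; cases j rule: parity_cases) auto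
  then show ?thesis unfolding Jq_def using ij by simp
qed

lemma Jq_left:
  assumes X: "X \<in> carrier_mat (2*d) m" and ij: "i < 2*d" "j < m"
  shows "(Jq d * X) $$ (i,j) = partner_sign i * X $$ (partner i, j)"
proof -
  have "(Jq d * X) $$ (i,j) = (\<Sum>k\<in>{0..<2*d}. Jq d $$ (i,k) * X $$ (k,j))"
    using X ij by (simp add: scalar_prod_def)
  also have "\<dots> = (\<Sum>k\<in>{0..<2*d}. if k = partner i then partner_sign i * X $$ (k,j) else 0)"
    by (rule sum.cong[OF refl]) (use ij in \<open>auto simp: Jq_entry\<close>)
  also have "\<dots> = partner_sign i * X $$ (partner i, j)" using partner_lt[OF ij(1)] by simp
  finally show ?thesis .
qed

lemma Jq_right:
  assumes X: "X \<in> carrier_mat m (2*d)" and ij: "i < m" "j < 2*d"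
  shows "(X * Jq d) $$ (i,j) = X $$ (i, partner j) * partner_sign (partner j)"
proof -
  have "(X * Jq d) $$ (i,j) = (\<Sum>k\<in>{0..<2*d}. X $$ (i,k) * Jq d $$ (k,j))"
    using X ij by (simp add: scalar_prod_def)
  also have "\<dots> = (\<Sum>k\<in>{0..<2*d}. if k = partner j then X $$ (i,k) * partner_sign k else 0)"
    by (rule sum.cong[OF refl]) (use ij in \<open>auto simp: Jq_entry partner_eq_iff\<close>)
  also have "\<dots> = X $$ (i, partner j) * partner_sign (partner j)" using partner_lt[OF ij(2)] by simp
  finally show ?thesis .
qed

lemma Jq_Jq: "Jq d * Jq d = 1\<^sub>m (2*d)"
proof (rule eq_matI)
  fix i j assume "i < dim_row (1\<^sub>m (2*d) :: complex mat)" "j < dim_col (1\<^sub>m (2*d) :: complex mat)"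
  then have ij: "i < 2*d" "j < 2*d" by auto
  have "(Jq d * Jq d) $$ (i,j) = partner_sign i * Jq d $$ (partner i, j)"
    by (rule Jq_left) (use ij in auto)
  also have "\<dots> = (if i = j then 1 else 0)"
    using ij partner_lt[OF ij(1)] partner_sign_partner[of i] by (auto simp: Jq_entry partner_eq_iff)
  finally show "(Jq d * Jq d) $$ (i,j) = 1\<^sub>m (2*d) $$ (i,j)" using ij by simp
qed auto

lemma Jq_cnj: "map_mat cnj (Jq d) = (-1) \<cdot>\<^sub>m Jq d"
proof (rule eq_matI)
  fix i j assume "i < dim_row ((-1) \<cdot>\<^sub>m Jq d)" "j < dim_col ((-1) \<cdot>\<^sub>m Jq d)"
  then have ij: "i < 2*d" "j < 2*d" by auto
  show "map_mat cnj (Jq d) $$ (i,j) = ((-1) \<cdot>\<^sub>m Jq d) $$ (i,j)"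
    using ij by (simp add: Jq_entry partner_sign_def)
qed auto

lemma Jq_diag_pow_comm:
  assumes L: "length ks = 2 * d" and pairs: "\<And>i. i < 2 * d \<Longrightarrow> ks ! partner i = ks ! i"
  shows "Jq d * diag_pow ks z = diag_pow ks z * Jq d"
proof (rule eq_matI)
  fix i j assume "i < dim_row (diag_pow ks z * Jq d)" "j < dim_col (diag_pow ks z * Jq d)"
  then have ij: "i < 2*d" "j < 2*d" using L by auto
  have l: "(Jq d * diag_pow ks z) $$ (i,j) = partner_sign i * diag_pow ks z $$ (partner i, j)"
    by (rule Jq_left) (use ij L in auto)
  have r: "(diag_pow ks z * Jq d) $$ (i,j) = diag_pow ks z $$ (i, partner j) * partner_sign (partner j)"
    by (rule Jq_right) (use ij L in auto)
  have fl: "partner i < 2*d" "partner j < 2*d" using ij partner_lt by auto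
  show "(Jq d * diag_pow ks z) $$ (i,j) = (diag_pow ks z * Jq d) $$ (i,j)"
  proof (cases "j = partner i")
    case True
    then show ?thesis
      unfolding l r using ij fl L pairs[OF ij(1)] by (simp add: diag_pow_def mult.commute)
  next
    case False
    then have "i \<noteq> partner j" by auto
    then show ?thesis unfolding l r using ij fl L False by (simp add: diag_pow_def)
  qed
qed (use L in auto)

definition Jf :: "fld \<Rightarrow> nat \<Rightarrow> complex mat" where
  "Jf F d = (if F = FH then Jq d else 1\<^sub>m (blk F * d))"

definition eps :: "fld \<Rightarrow> complex" where
  "eps F = (if F = FH then -1 else 1)"

lemma conj_twist_Jf: "conj_twist (blk F * d) (Jf F d) (eps F)"
  by unfold_locales
    (auto simp: Jf_def eps_def blk_def Jq_Jq Jq_cnj cnj_hom.mat_hom_one)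

lemma in_Fd_iff_twist:
  assumes "F \<noteq> FC"
  shows "in_Fd F d Q \<longleftrightarrow>
    Q \<in> carrier_mat (blk F * d) (blk F * d) \<and> conj_twist.twist (Jf F d) Q = Q"
  using assms conj_twist.twist_def[OF conj_twist_Jf, of F d Q]
  by (cases F) (auto simp: in_Fd_def Jf_def)

lemma length_expand_idx: "length (expand_idx F K) = blk F * length K"
proof -
  have "length (concat (map (\<lambda>k. [k, k]) K)) = 2 * length K" by (induction K) auto
  then show ?thesis unfolding expand_idx_def blk_def by auto
qed

lemma nth_concat_pairs:
  "i < 2 * length K \<Longrightarrow> concat (map (\<lambda>k. [k, k]) K) ! i = K ! (i div 2)"
proof (induction K arbitrary: i)
  case (Cons a K)
  show ?case
  proof (cases "i < 2")
    case True
    then have "i = 0 \<or> i = 1" by auto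
    then show ?thesis by auto
  next
    case False
    then obtain m where m: "i = Suc (Suc m)" by (metis add_2_eq_Suc le_add_diff_inverse not_less)
    then show ?thesis using Cons by simp
  qed
qed simp

lemma nth_expand_idx:
  assumes "i < blk F * length K"
  shows "expand_idx F K ! i = K ! (i div blk F)"
  using assms nth_concat_pairs[of i K] by (cases "F = FH") (simp_all add: expand_idx_def blk_def)

lemma D_F_eq_diag_pow: "D_F F K z = diag_pow (expand_idx F K) z"
  unfolding D_F_def diag_pow_def length_expand_idx by (intro eq_matI) (auto simp: nth_expand_idx)

lemma Jf_diag_pow_expand_idx_comm:
  assumes "length K = d"
  shows "Jf F d * diag_pow (expand_idx F K) z = diag_pow (expand_idx F K) z * Jf F d"
proof (cases "F = FH")
  case True
  have "expand_idx F K ! partner i = expand_idx F K ! i" if "i < 2 * d" for i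
    using that assms True partner_lt[OF that] by (simp add: nth_expand_idx blk_def)
  then show ?thesis using True assms by (simp add: Jf_def Jq_diag_pow_comm length_expand_idx blk_def)
next
  case False
  then show ?thesis using assms by (simp add: Jf_def length_expand_idx)
qed

lemma is_F_laurent_iff_twist:
  assumes "F \<noteq> FC"
  shows "is_F_laurent F d C \<longleftrightarrow>
    is_laurent (blk F * d) C \<and> (\<forall>k. conj_twist.twist (Jf F d) (C k) = C k)"
  using in_Fd_iff_twist[OF assms] by (auto simp: is_F_laurent_def is_laurent_def)

lemma F_wh_factorization:
  assumes A: "is_F_laurent F d A" and K: "length K = d"
    and P1: "plus_factor (blk F * d) P1" and M1: "minus_factor (blk F * d) M1"
    and fac: "\<And>z. z \<noteq> 0 \<Longrightarrow> leval (blk F * d) A z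
      = leval (blk F * d) P1 z * diag_pow (expand_idx F K) z * leval (blk F * d) M1 z"
  shows "\<exists>P M. is_F_laurent F d P \<and> is_F_laurent F d M \<and>
    plus_factor (blk F * d) P \<and> minus_factor (blk F * d) M \<and>
    (\<forall>z. z \<noteq> 0 \<longrightarrow> leval (blk F * d) A z
      = leval (blk F * d) P z * diag_pow (expand_idx F K) z * leval (blk F * d) M z)"
proof (cases "F = FC")
  case True
  then show ?thesis using P1 M1 fac
    by (auto simp: is_F_laurent_def in_Fd_def plus_factor_def minus_factor_def is_poly_pos_def
        is_poly_neg_def is_laurent_def)
next
  case False
  interpret conj_twist "blk F * d" "Jf F d" "eps F" by (rule conj_twist_Jf)
  have "is_laurent (blk F * d) A" "\<And>k. twist (A k) = A k"
    using A is_F_laurent_iff_twist[OF False] by auto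
  from twist_invariant_wh_factorization[OF this _ Jf_diag_pow_expand_idx_comm[OF K] P1 M1 fac]
  show ?thesis using K False
    by (auto simp: is_F_laurent_iff_twist length_expand_idx plus_factor_def minus_factor_def
        is_poly_pos_def is_poly_neg_def)
qed

theorem theorem3p1:
  fixes F :: fld and d :: nat and A :: "int \<Rightarrow> complex mat" and K :: "int list"
  assumes "is_F_laurent F d A"
    and "\<forall>z. cmod z = 1 \<longrightarrow> det (leval (blk F * d) A z) \<noteq> 0"
    and "sym_partial_indices F d A K"
  shows "\<exists>Ap Am. is_F_laurent F d Ap \<and> is_F_laurent F d Am \<and>
           plus_factor (blk F * d) Ap \<and> minus_factor (blk F * d) Am \<and>
           (\<forall>z. z \<noteq> 0 \<longrightarrow>
              leval (blk F * d) A z = leval (blk F * d) Ap z * D_F F K z * leval (blk F * d) Am z)"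
proof -
  have K: "length K = d" using assms(3) by (simp add: sym_partial_indices_def)
  obtain P1 M1 where "plus_factor (blk F * d) P1" "minus_factor (blk F * d) M1"
    and "\<And>z. z \<noteq> 0 \<Longrightarrow> leval (blk F * d) A z
      = leval (blk F * d) P1 z * diag_pow (expand_idx F K) z * leval (blk F * d) M1 z"
    using assms(3) by (auto simp: sym_partial_indices_def std_partial_indices_def)
  from F_wh_factorization[OF assms(1) K this] show ?thesis by (simp add: D_F_eq_diag_pow)
qed

end
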